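(* Let $0<\gamma<\alpha<1$, $f\in C^1[0,1]$ with $f(0)=0$, $h=\dot f$, $D\in C^1[0,1]$ with $D>0$ on $(0,\alpha)$ and $D<0$ on $(\alpha,1)$, $g\in C^0[0,1]$ with $g<0$ on $(0,\gamma)$, $g>0$ on $(\gamma,1)$, $g(0)=g(\gamma)=g(1)=0$, $q=Dg$. Then Problem (P) admits a solution for some $c\in\mathbb R$ if and only if $c^*_{1.1}<c^*_{1.2}$ and $c_1^*\ge c^*_{3.2}$. In that case necessarily $c=c_1^*$ and the solution is unique.
   Context: Problem (P) (with parameter $c$): find $z\in C^0[0,1]\cap C^1((0,1)\setminus\{\alpha\})$ with $\dot z=h-c-q/z$ on $(0,\alpha)\cup(\alpha,1)$, $z<0$ on $(0,\alpha)$, $z>0$ on $(\alpha,1)$, $z(0)=z(\alpha)=z(1)=0$. Threshold $c^*$: for $\sigma_1<\sigma_2$ and $H,Q$ continuous on $[\sigma_1,\sigma_2]$ with $Q>0$ on $(\sigma_1,\sigma_2)$, $Q(\sigma_1)=Q(\sigma_2)=0$, and every $c$, let $\zeta_c\in C^0[\sigma_1,\sigma_2]\cap C^1(\sigma_1,\sigma_2)$ be the unique function with $\dot\zeta_c=H-c-Q/\zeta_c$, $\zeta_c<0$ on $(\sigma_1,\sigma_2)$, $\zeta_c(\sigma_2)=0$; $c^*(Q;H;\sigma_1,\sigma_2):=\sup\{c:\zeta_c(\sigma_1)<0\}\in(-\infty,\infty]$. With $\tilde q(\phi)=-q(1-\phi)$, $\tilde h(\phi)=-h(1-\phi)$, $\bar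 h(\phi)=h(1-\phi)$: $c^*_{1.1}:=-c^*(\tilde q;\tilde h;1-\gamma,1)$, $c^*_{1.2}:=c^*(q;h;\gamma,\alpha)$, $c^*_{3.2}:=c^*(\tilde q;\bar h;0,1-\alpha)$. When $c^*_{1.1}<c^*_{1.2}$, $c_1^*$ denotes the unique real $c$ for which the problem "find $z\in C^0[0,\alpha]\cap C^1(0,\alpha)$ with $\dot z=h-c-q/z$ and $z<0$ on $(0,\alpha)$, $z(0)=z(\alpha)=0$" has a solution (it lies in $(c^*_{1.1},c^*_{1.2})$). *)

theory Defs
  imports "HOL-Analysis.Analysis" "HOL-Library.Extended_Real"
begin

definition C1_on :: "real \<Rightarrow> real \<Rightarrow> (real \<Rightarrow> real) \<Rightarrow> (real \<Rightarrow> real) \<Rightarrow> bool" where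
  "C1_on a b u u' \<longleftrightarrow> (\<forall>x\<in>{a..b}. (u has_real_derivative u' x) (at x within {a..b}))
                        \<and> continuous_on {a..b} u'"

definition zeta_sol :: "(real \<Rightarrow> real) \<Rightarrow> (real \<Rightarrow> real) \<Rightarrow> real \<Rightarrow> real \<Rightarrow> real
                        \<Rightarrow> (real \<Rightarrow> real) \<Rightarrow> bool" where
  "zeta_sol Q H s1 s2 c \<zeta> \<longleftrightarrow>
     continuous_on {s1..s2} \<zeta>
     \<and> (\<forall>x\<in>{s1<..<s2}. (\<zeta> has_real_derivative (H x - c - Q x / \<zeta> x)) (at x))
     \<and> (\<forall>x\<in>{s1<..<s2}. \<zeta> x < 0)
     \<and> \<zeta> s2 = 0"

text \<open>Threshold c*(Q;H;s1,s2) = sup{c : zeta_c(s1) < 0}, as an extended real.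
  Since zeta_c is unique on [s1,s2], "zeta_c(s1) < 0" is rendered as existence of a
  solution zeta with zeta(s1) < 0.\<close>
definition cstar :: "(real \<Rightarrow> real) \<Rightarrow> (real \<Rightarrow> real) \<Rightarrow> real \<Rightarrow> real \<Rightarrow> ereal" where
  "cstar Q H s1 s2 = Sup {ereal c | c. \<exists>\<zeta>. zeta_sol Q H s1 s2 c \<zeta> \<and> \<zeta> s1 < 0}"

definition probP :: "real \<Rightarrow> (real \<Rightarrow> real) \<Rightarrow> (real \<Rightarrow> real) \<Rightarrow> real \<Rightarrow> (real \<Rightarrow> real) \<Rightarrow> bool" where
  "probP \<alpha> h q c z \<longleftrightarrow>
     continuous_on {0..1} z
     \<and> (\<forall>x\<in>{0<..<1} - {\<alpha>}. (z has_real_derivative (h x - c - q x / z x)) (at x))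
     \<and> (\<forall>x\<in>{0<..<\<alpha>}. z x < 0)
     \<and> (\<forall>x\<in>{\<alpha><..<1}. z x > 0)
     \<and> z 0 = 0 \<and> z \<alpha> = 0 \<and> z 1 = 0"

definition prob1 :: "real \<Rightarrow> (real \<Rightarrow> real) \<Rightarrow> (real \<Rightarrow> real) \<Rightarrow> real \<Rightarrow> (real \<Rightarrow> real) \<Rightarrow> bool" where
  "prob1 \<alpha> h q c z \<longleftrightarrow>
     continuous_on {0..\<alpha>} z
     \<and> (\<forall>x\<in>{0<..<\<alpha>}. (z has_real_derivative (h x - c - q x / z x)) (at x))
     \<and> (\<forall>x\<in>{0<..<\<alpha>}. z x < 0)
     \<and> z 0 = 0 \<and> z \<alpha> = 0"

definition c11 :: "real \<Rightarrow> (real \<Rightarrow> real) \<Rightarrow> (real \<Rightarrow> real) \<Rightarrow> ereal" where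
  "c11 \<gamma> h q = - cstar (\<lambda>\<phi>. - q (1 - \<phi>)) (\<lambda>\<phi>. - h (1 - \<phi>)) (1 - \<gamma>) 1"

definition c12 :: "real \<Rightarrow> real \<Rightarrow> (real \<Rightarrow> real) \<Rightarrow> (real \<Rightarrow> real) \<Rightarrow> ereal" where
  "c12 \<gamma> \<alpha> h q = cstar q h \<gamma> \<alpha>"

definition c32 :: "real \<Rightarrow> (real \<Rightarrow> real) \<Rightarrow> (real \<Rightarrow> real) \<Rightarrow> ereal" where
  "c32 \<alpha> h q = cstar (\<lambda>\<phi>. - q (1 - \<phi>)) (\<lambda>\<phi>. h (1 - \<phi>)) 0 (1 - \<alpha>)"

text \<open>c_1^*: the unique c for which prob1 has a solution (meaningful when c11 < c12).\<close>
definition c1star :: "real \<Rightarrow> (real \<Rightarrow> real) \<Rightarrow> (real \<Rightarrow> real) \<Rightarrow> real" where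
  "c1star \<alpha> h q = (THE c. \<exists>z. prob1 \<alpha> h q c z)"

end

(* Cutting Problem (P) at the zero gamma of q and at the zero alpha of D, and reflecting
   phi to 1 - phi on the pieces where q is negative, turns each piece into the singular problem
   zeta' = H - c - Q/zeta, zeta < 0, zeta(s2) = 0 with Q > 0 inside. For every speed c this problem
   has exactly one solution: it is the increasing limit, as eps tends to 0, of the solutions
   ending at -eps, and comparison gives uniqueness. Its value V(c) at the left end is
   nondecreasing, Lipschitz, unbounded below, and negative exactly when c < c*.
   On [0,alpha] a solution consists of the solution of speed c on [gamma,alpha] and the reflected
   solution of speed -c on [0,gamma]; they fit together iff their left values agree and are
   negative. These two values move in opposite directions with c, so by the intermediate value
   theorem they agree for some c, and the common value is negative precisely when
   c*_{1.1} < c*_{1.2}. The speed is unique because q(gamma) = 0. Finally, a solution on [0,alpha]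
   extends to [alpha,1] iff the reflected problem on [alpha,1] at speed c_1^* has a solution
   vanishing at its left end, i.e. iff c_1^* >= c*_{3.2}. *)

theory Submission
  imports Defs
begin

lemma last_crossing:
  fixes f :: "real \<Rightarrow> real"
  assumes "x \<le> y" and cont: "continuous_on {x..y} f" and "\<theta> \<le> f x" and "f y < \<theta>"
  obtains s where "x \<le> s" "s < y" "f s = \<theta>" "\<And>t. s < t \<Longrightarrow> t \<le> y \<Longrightarrow> f t < \<theta>"
proof -
  define S where "S = {x..y} \<inter> f -` {\<theta>..}"
  have "closed S" unfolding S_def by (rule continuous_closed_preimage[OF cont]) auto
  moreover have "x \<in> S" "bdd_above S" using assms by (auto simp: S_def)
  ultimately have sS: "Sup S \<in> S" by (auto intro: closed_contains_Sup)
  define s where "s = Sup S"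
  have s: "x \<le> s" "s \<le> y" "\<theta> \<le> f s" using sS by (auto simp: s_def S_def)
  have after: "f t < \<theta>" if "s < t" "t \<le> y" for t
    using cSup_upper[of t S] \<open>bdd_above S\<close> that s by (force simp: s_def S_def)
  have "s < y" using s \<open>f y < \<theta>\<close> by (cases "s = y") auto
  moreover have "f s \<le> \<theta>"
  proof (rule ccontr)
    assume "\<not> f s \<le> \<theta>"
    moreover have "continuous_on {s..y} f" by (rule continuous_on_subset[OF cont]) (use s in auto)
    then obtain t where "s \<le> t" "t \<le> y" "f t = \<theta>"
      using IVT2'[of f y \<theta> s] \<open>s < y\<close> \<open>\<not> f s \<le> \<theta>\<close> \<open>f y < \<theta>\<close> by auto
    ultimately show False using after[of t] by (cases "s = t") auto
  qed
  ultimately show thesis using that s after by simp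
qed

lemma le_if_deriv_nonpos_below_level:
  fixes u u' :: "real \<Rightarrow> real"
  assumes "x \<le> y" and cont: "continuous_on {x..y} u"
    and der: "\<And>t. x < t \<Longrightarrow> t < y \<Longrightarrow> (u has_real_derivative u' t) (at t)"
    and nonpos: "\<And>t. x < t \<Longrightarrow> t < y \<Longrightarrow> u t < \<theta> \<Longrightarrow> u' t \<le> 0"
    and "u x < \<theta>"
  shows "u y \<le> u x"
proof (rule ccontr)
  assume "\<not> u y \<le> u x"
  moreover have "continuous_on {x..y} (\<lambda>t. - u t)" using cont by (intro continuous_intros)
  ultimately obtain s where s: "x \<le> s" "s < y" "- u s = - u x"
    and after: "\<And>t. s < t \<Longrightarrow> t \<le> y \<Longrightarrow> - u t < - u x"
    using last_crossing[of x y "\<lambda>t. - u t" "- u x"] \<open>x \<le> y\<close> by auto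
  have "(u \<longlongrightarrow> u s) (at s within {x..y})"
    using cont s(1,2) unfolding continuous_on_def by auto
  then have "\<forall>\<^sub>F t in at s within {x..y}. u t < \<theta>"
    using s(3) \<open>u x < \<theta>\<close> by (intro order_tendstoD(2)) auto
  then obtain d where d: "d > 0" "\<And>t. t \<in> {x..y} \<Longrightarrow> t \<noteq> s \<Longrightarrow> dist t s < d \<Longrightarrow> u t < \<theta>"
    by (auto simp: eventually_at)
  define t1 where "t1 = min y (s + d / 2)"
  have t1: "s < t1" "t1 \<le> y" using s d by (auto simp: t1_def)
  have "u t1 \<le> u s"
  proof (rule DERIV_nonpos_imp_decreasing_open[OF less_imp_le[OF t1(1)]])
    show "continuous_on {s..t1} u" by (rule continuous_on_subset[OF cont]) (use s t1 in auto)
    fix t assume "s < t" "t < t1"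
    then show "\<exists>l. (u has_real_derivative l) (at t) \<and> l \<le> 0"
      using der nonpos d(2)[of t] s t1 by (force simp: t1_def dist_real_def)
  qed
  then show False using s(3) after[OF t1] by simp
qed

lemma has_real_derivative_if_continuous_off_point:
  fixes f f' :: "real \<Rightarrow> real"
  assumes "a < x" "x < b" and cf: "continuous_on {a..b} f" and cf': "continuous_on {a..b} f'"
    and der: "\<And>t. a < t \<Longrightarrow> t < b \<Longrightarrow> t \<noteq> x \<Longrightarrow> (f has_real_derivative f' t) (at t)"
  shows "(f has_real_derivative f' x) (at x)"
proof -
  have ftc: "f t = f a + integral {a..t} f'" if "t \<in> {a..b}" for t
  proof -
    have "(f' has_integral (f t - f a)) {a..t}"
      by (rule fundamental_theorem_of_calculus_interior_strong[of "{x}"])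
        (use that der in \<open>auto intro: continuous_on_subset[OF cf]
                         simp: has_real_derivative_iff_has_vector_derivative[symmetric]\<close>)
    then show ?thesis by (simp add: integral_unique)
  qed
  have "((\<lambda>t. f a + integral {a..t} f') has_real_derivative f' x) (at x within {a..b})"
    using integral_has_real_derivative[OF cf'] assms by (auto intro!: derivative_eq_intros)
  moreover have "at x within {a..b} = at x" using assms by (intro at_within_Icc_at) auto
  ultimately have "((\<lambda>t. f a + integral {a..t} f') has_real_derivative f' x) (at x)" by simp
  then show ?thesis
  proof (rule has_field_derivative_transform_within_open[where S = "{a<..<b}"])
    show "x \<in> {a<..<b}" using assms by simp
    show "f a + integral {a..t} f' = f t" if "t \<in> {a<..<b}" for t
      using ftc[of t] that by simp
  qed simp
qed

lemma has_real_derivative_reflect: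
  fixes z :: "real \<Rightarrow> real"
  assumes "(z has_real_derivative d) (at (s - x))"
  shows "((\<lambda>t. z (s - t)) has_real_derivative - d) (at x)"
proof -
  have "((\<lambda>t. s - t) has_real_derivative - 1) (at x)"
    by (auto intro!: derivative_eq_intros)
  from DERIV_chain'[OF this] assms show ?thesis by simp
qed

lemma lipschitz_on_inverse_truncated:
  fixes \<rho> :: real
  assumes "\<rho> > 0"
  shows "(1 / \<rho>\<^sup>2)-lipschitz_on UNIV (\<lambda>z. - 1 / min z (- \<rho>))"
proof (rule lipschitz_onI)
  fix x y :: real
  define X Y where "X = min x (- \<rho>)" and "Y = min y (- \<rho>)"
  have XY: "\<rho> \<le> - X" "\<rho> \<le> - Y" by (auto simp: X_def Y_def)
  have prod: "\<rho> * \<rho> \<le> X * Y" using XY assms mult_mono[of \<rho> "- X" \<rho> "- Y"] by simp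
  have pos: "0 < X * Y" using prod assms by (smt (verit) mult_pos_pos)
  have "- 1 / X - - 1 / Y = (X - Y) / (X * Y)" using XY assms by (simp add: field_simps)
  then have "\<bar>- 1 / X - - 1 / Y\<bar> = \<bar>X - Y\<bar> / (X * Y)"
    using pos by (simp add: abs_divide)
  also have "\<dots> \<le> \<bar>x - y\<bar> / (\<rho> * \<rho>)"
    by (rule frac_le) (use prod assms in \<open>auto simp: X_def Y_def min_def\<close>)
  finally show "dist (- 1 / X) (- 1 / Y) \<le> 1 / \<rho>\<^sup>2 * dist x y"
    by (simp add: dist_real_def power2_eq_square)
qed simp

lemma continuous_within_squeeze_below:
  fixes V :: "real \<Rightarrow> real" and v :: "nat \<Rightarrow> real \<Rightarrow> real"
  assumes cont: "\<And>n. continuous (at x within S) (v n)" and lim: "(\<lambda>n. v n x) \<longlonglongrightarrow> V x"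
    and below: "\<And>n t. t \<in> S \<Longrightarrow> v n t \<le> V t" and max: "\<And>t. t \<in> S \<Longrightarrow> V t \<le> V x"
  shows "continuous (at x within S) V"
  unfolding continuous_within
proof (rule order_tendstoI)
  fix y assume "y < V x"
  then have "\<forall>\<^sub>F n in sequentially. y < v n x" by (rule order_tendstoD(1)[OF lim])
  then obtain n where "y < v n x" by (auto simp: eventually_sequentially)
  then have "\<forall>\<^sub>F t in at x within S. y < v n t"
    using cont[of n] by (auto simp: continuous_within dest: order_tendstoD(1))
  moreover have "\<forall>\<^sub>F t in at x within S. t \<in> S" by (simp add: eventually_at_filter)
  ultimately show "\<forall>\<^sub>F t in at x within S. y < V t"
    by eventually_elim (meson below less_le_trans)
next
  fix y assume "V x < y"
  have "\<forall>\<^sub>F t in at x within S. t \<in> S" by (simp add: eventually_at_filter)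
  then show "\<forall>\<^sub>F t in at x within S. V t < y"
    by eventually_elim (use max \<open>V x < y\<close> in fastforce)
qed

lemma continuous_on_reflect:
  fixes u :: "real \<Rightarrow> real"
  assumes "continuous_on {s..e} u"
  shows "continuous_on {1 - e..1 - s} (\<lambda>\<phi>. u (1 - \<phi>))"
  by (rule continuous_on_compose2[OF assms continuous_on_op_minus]) auto

definition glue :: "real \<Rightarrow> (real \<Rightarrow> real) \<Rightarrow> (real \<Rightarrow> real) \<Rightarrow> real \<Rightarrow> real" where
  "glue p u v x = (if x \<le> p then u x else v x)"

lemma continuous_on_glue:
  assumes "a \<le> p" "p \<le> b" "continuous_on {a..p} u" "continuous_on {p..b} v" "u p = v p"
  shows "continuous_on {a..b} (glue p u v)"
proof -
  have "{x \<in> {a..b}. x \<le> p} = {a..p}" "{x \<in> {a..b}. p \<le> x} = {p..b}" using assms by auto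
  then show ?thesis
    unfolding glue_def using assms
    by (intro continuous_on_cases_le[where h = "\<lambda>x. x" and a = p] continuous_on_id) auto
qed

lemma has_real_derivative_glue:
  assumes "x \<noteq> p" and left: "x < p \<Longrightarrow> (u has_real_derivative d) (at x)"
    and right: "p < x \<Longrightarrow> (v has_real_derivative d) (at x)"
  shows "(glue p u v has_real_derivative d) (at x)"
proof (cases "x < p")
  case True
  show ?thesis
    by (rule has_field_derivative_transform_within_open[OF left[OF True], where S = "{..<p}"])
      (use True in \<open>auto simp: glue_def\<close>)
next
  case False
  then have "p < x" using \<open>x \<noteq> p\<close> by simp
  show ?thesis
    by (rule has_field_derivative_transform_within_open[OF right[OF \<open>p < x\<close>], where S = "{p<..}"])
      (use \<open>p < x\<close> in \<open>auto simp: glue_def\<close>)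
qed

section \<open>Picard iteration for a backward initial value problem\<close>

lemma integral_power_diff_right:
  fixes x b :: real
  assumes "x \<le> b"
  shows "integral {x..b} (\<lambda>t. (b - t) ^ n) = (b - x) ^ Suc n / real (Suc n)"
proof -
  have "((\<lambda>t. - ((b - t) ^ Suc n) / real (Suc n)) has_real_derivative (b - t) ^ n) (at t within {x..b})"
    for t
    by (intro derivative_eq_intros) (auto simp del: of_nat_Suc)
  then have "((\<lambda>t. (b - t) ^ n) has_integral (0 - - ((b - x) ^ Suc n) / real (Suc n))) {x..b}"
    using fundamental_theorem_of_calculus[OF assms, of "\<lambda>t. - ((b - t) ^ Suc n) / real (Suc n)"]
    by (simp add: has_real_derivative_iff_has_vector_derivative)
  then show ?thesis by (simp add: integral_unique)
qed

locale backward_lipschitz_ivp =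
  fixes a b u0 L :: real and A B \<phi> :: "real \<Rightarrow> real"
  assumes ab: "a < b" and cont_A: "continuous_on {a..b} A" and cont_B: "continuous_on {a..b} B"
    and lipschitz: "L-lipschitz_on UNIV \<phi>"
begin

definition rhs :: "(real \<Rightarrow> real) \<Rightarrow> real \<Rightarrow> real" where
  "rhs f t = A t + B t * \<phi> (f t)"

definition volterra :: "(real \<Rightarrow> real) \<Rightarrow> real \<Rightarrow> real" where
  "volterra f s = u0 - integral {s..b} (rhs f)"

definition clamp :: "real \<Rightarrow> real" where
  "clamp x = max a (min x b)"

text \<open>Bounded continuous functions on the whole line stand in for \<open>C[a,b]\<close>:
  the Picard operator extends its output constantly outside \<open>[a,b]\<close>.\<close>
definition picard :: "(real \<Rightarrow>\<^sub>C real) \<Rightarrow> (real \<Rightarrow>\<^sub>C real)" where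
  "picard f = Bcontfun (\<lambda>x. volterra f (clamp x))"

lemma clamp_in: "clamp x \<in> {a..b}"
  using ab by (auto simp: clamp_def)

lemma clamp_id: "x \<in> {a..b} \<Longrightarrow> clamp x = x"
  by (auto simp: clamp_def)

lemma continuous_on_rhs:
  assumes "continuous_on {a..b} f"
  shows "continuous_on {a..b} (rhs f)"
proof -
  have "continuous_on {a..b} (\<lambda>t. \<phi> (f t))"
    using continuous_on_compose2[OF lipschitz_on_continuous_on[OF lipschitz] assms] by simp
  then show ?thesis unfolding rhs_def by (intro continuous_intros cont_A cont_B)
qed

lemma continuous_on_volterra:
  assumes "continuous_on {a..b} f"
  shows "continuous_on {a..b} (volterra f)"
proof -
  have "rhs f integrable_on {a..b}" by (rule integrable_continuous_real[OF continuous_on_rhs[OF assms]])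
  then show ?thesis unfolding volterra_def by (intro continuous_intros indefinite_integral_continuous_1')
qed

lemma picard_apply: "apply_bcontfun (picard f) x = volterra f (clamp x)"
proof -
  have cont: "continuous_on {a..b} (volterra f)" by (simp add: continuous_on_volterra)
  then have "continuous_on UNIV (\<lambda>x. volterra f (clamp x))"
    unfolding clamp_def using ab
    by (intro continuous_on_compose2[OF cont] continuous_intros) auto
  moreover have "range (\<lambda>x. volterra f (clamp x)) \<subseteq> volterra f ` {a..b}"
    using clamp_in by auto
  then have "bounded (range (\<lambda>x. volterra f (clamp x)))"
    by (rule bounded_subset[OF compact_imp_bounded[OF compact_continuous_image[OF cont compact_Icc]]])
  ultimately show ?thesis
    by (simp add: picard_def bcontfun_def Bcontfun_inverse)
qed

lemma picard_iterate_diff_le: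
  assumes B: "\<And>t. t \<in> {a..b} \<Longrightarrow> \<bar>B t\<bar> \<le> Bm" and x: "x \<in> {a..b}"
  shows "\<bar>(picard ^^ n) f x - (picard ^^ n) g x\<bar> \<le> (Bm * L) ^ n * (b - x) ^ n / fact n * dist f g"
  using x
proof (induction n arbitrary: x)
  case 0
  then show ?case using dist_bounded[of f _ g] by (simp add: dist_real_def)
next
  case (Suc n)
  let ?F = "apply_bcontfun ((picard ^^ n) f)" and ?G = "apply_bcontfun ((picard ^^ n) g)"
  let ?bound = "\<lambda>t. (Bm * L) ^ Suc n / fact n * dist f g * (b - t) ^ n"
  have L: "0 \<le> L" using lipschitz_on_nonneg[OF lipschitz] .
  have "rhs (apply_bcontfun h) integrable_on {x..b}" for h
    using Suc.prems
    by (intro integrable_continuous_real continuous_on_subset[OF continuous_on_rhs]) auto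
  then have int: "rhs ?F integrable_on {x..b}" "rhs ?G integrable_on {x..b}" by this+
  have diff: "(picard ^^ Suc n) f x - (picard ^^ Suc n) g x = integral {x..b} (\<lambda>t. rhs ?G t - rhs ?F t)"
    using Suc.prems int by (simp add: picard_apply clamp_id volterra_def integral_diff)
  have bound: "norm (rhs ?G t - rhs ?F t) \<le> ?bound t" if t: "t \<in> {x..b}" for t
  proof -
    have t': "t \<in> {a..b}" using t Suc.prems by auto
    have "\<bar>rhs ?G t - rhs ?F t\<bar> = \<bar>B t\<bar> * \<bar>\<phi> (?G t) - \<phi> (?F t)\<bar>"
      by (simp add: rhs_def abs_mult[symmetric] right_diff_distrib)
    also have "\<dots> \<le> Bm * (L * \<bar>?G t - ?F t\<bar>)"
      using lipschitz_onD[OF lipschitz, of "?G t" "?F t"] B[OF t']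
      by (intro mult_mono) (auto simp: dist_real_def)
    also have "\<dots> \<le> Bm * (L * ((Bm * L) ^ n * (b - t) ^ n / fact n * dist f g))"
      using Suc.IH[OF t'] B[OF t'] L by (intro mult_left_mono) (auto simp: abs_minus_commute)
    finally show ?thesis by (simp add: field_simps)
  qed
  have "?bound integrable_on {x..b}" by (intro integrable_continuous_real continuous_intros)
  then have "norm (integral {x..b} (\<lambda>t. rhs ?G t - rhs ?F t)) \<le> integral {x..b} ?bound"
    using int bound by (intro integral_norm_bound_integral integrable_diff) auto
  also have "\<dots> = (Bm * L) ^ Suc n / fact n * dist f g * ((b - x) ^ Suc n / real (Suc n))"
    using Suc.prems by (simp only: integral_mult_right integral_power_diff_right atLeastAtMost_iff)
  also have "\<dots> = (Bm * L) ^ Suc n * (b - x) ^ Suc n / fact (Suc n) * dist f g"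
    by (simp only: fact_Suc of_nat_mult) (simp add: field_simps)
  finally show ?case by (simp only: diff real_norm_def)
qed

lemma dist_picard_iterate_le:
  assumes B: "\<And>t. t \<in> {a..b} \<Longrightarrow> \<bar>B t\<bar> \<le> Bm" "0 \<le> Bm"
  shows "dist ((picard ^^ Suc n) f) ((picard ^^ Suc n) g) \<le> (Bm * L * (b - a)) ^ Suc n / fact (Suc n) * dist f g"
proof (rule dist_bound)
  fix x
  have "(picard ^^ Suc n) h x = (picard ^^ Suc n) h (clamp x)" for h
    by (simp only: funpow.simps comp_def picard_apply clamp_id[OF clamp_in])
  then have "dist ((picard ^^ Suc n) f x) ((picard ^^ Suc n) g x)
      = \<bar>(picard ^^ Suc n) f (clamp x) - (picard ^^ Suc n) g (clamp x)\<bar>"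
    by (simp only: dist_real_def)
  also have "\<dots> \<le> (Bm * L) ^ Suc n * (b - clamp x) ^ Suc n / fact (Suc n) * dist f g"
    by (rule picard_iterate_diff_le[OF B(1) clamp_in])
  also have "\<dots> \<le> (Bm * L) ^ Suc n * (b - a) ^ Suc n / fact (Suc n) * dist f g"
    using clamp_in[of x] B(2) lipschitz_on_nonneg[OF lipschitz]
    by (intro mult_right_mono divide_right_mono mult_left_mono power_mono) auto
  finally show "dist ((picard ^^ Suc n) f x) ((picard ^^ Suc n) g x)
      \<le> (Bm * L * (b - a)) ^ Suc n / fact (Suc n) * dist f g"
    by (simp only: power_mult_distrib)
qed

lemma picard_fixpoint: "\<exists>f. picard f = f"
proof -
  obtain Bm where B: "\<And>t. t \<in> {a..b} \<Longrightarrow> \<bar>B t\<bar> \<le> Bm" "0 \<le> Bm"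
    using compact_imp_bounded[OF compact_continuous_image[OF cont_B compact_Icc]]
    by (force simp: bounded_pos intro: less_imp_le)
  define K where "K = Bm * L * (b - a)"
  have "K \<ge> 0" using B(2) ab lipschitz_on_nonneg[OF lipschitz] by (simp add: K_def)
  have "(\<lambda>n. K ^ n / fact n) \<longlonglongrightarrow> 0"
    using summable_LIMSEQ_zero[OF summable_exp[of K]] by (simp add: field_simps)
  then have "\<forall>\<^sub>F n in sequentially. K ^ n / fact n < 1" by (rule order_tendstoD) simp
  then obtain N where "\<And>n. n \<ge> N \<Longrightarrow> K ^ n / fact n < 1"
    unfolding eventually_sequentially by blast
  then have N: "K ^ Suc N / fact (Suc N) < 1" using le_SucI by blast
  have "\<exists>!f. (picard ^^ Suc N) f = f"
    by (rule banach_fix_type[of "K ^ Suc N / fact (Suc N)"])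
      (use N \<open>K \<ge> 0\<close> dist_picard_iterate_le[OF B] in \<open>simp_all add: K_def\<close>)
  then obtain f where f: "(picard ^^ Suc N) f = f" "\<And>g. (picard ^^ Suc N) g = g \<Longrightarrow> g = f"
    by metis
  have "(picard ^^ Suc N) (picard f) = picard f"
    by (metis f(1) funpow_swap1)
  then show ?thesis using f(2) by blast
qed

theorem solution_exists:
  "\<exists>u. continuous_on {a..b} u \<and> u b = u0 \<and>
     (\<forall>x\<in>{a..b}. (u has_real_derivative A x + B x * \<phi> (u x)) (at x within {a..b}))"
proof -
  obtain f where f: "picard f = f" using picard_fixpoint by blast
  define u where "u = apply_bcontfun f"
  have u: "u x = volterra u x" if "x \<in> {a..b}" for x
    using picard_apply[of f x] f that by (simp add: u_def clamp_id)
  have cont: "continuous_on {a..b} u" by (simp add: u_def)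
  show ?thesis
  proof (intro exI[of _ u] conjI ballI cont)
    show "u b = u0" using u[of b] ab by (simp add: volterra_def)
    fix x assume x: "x \<in> {a..b}"
    have "(volterra u has_real_derivative rhs u x) (at x within {a..b})"
      unfolding volterra_def
      by (rule derivative_eq_intros integral_has_real_derivative' continuous_on_rhs cont x | simp)+
    then have "(u has_real_derivative rhs u x) (at x within {a..b})"
      by (rule has_field_derivative_transform_within[where d = 1]) (use x u in auto)
    then show "(u has_real_derivative A x + B x * \<phi> (u x)) (at x within {a..b})"
      by (simp add: rhs_def)
  qed
qed

end

section \<open>The singular equation \<open>\<zeta>' = H - c - Q / \<zeta>\<close>\<close>

locale singular_ode =
  fixes a b :: real and H Q :: "real \<Rightarrow> real"
  assumes ab: "a < b" and cont_H: "continuous_on {a..b} H" and cont_Q: "continuous_on {a..b} Q"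
    and Q_pos: "\<And>x. a < x \<Longrightarrow> x < b \<Longrightarrow> Q x > 0"
begin

lemma Q_nonneg:
  assumes "x \<in> {a..b}"
  shows "Q x \<ge> 0"
proof (rule continuous_ge_on_closure[where S = "{a<..<b}" and f = Q and x = x])
  show "continuous_on (closure {a<..<b}) Q" "x \<in> closure {a<..<b}" using cont_Q assms ab by auto
qed (use Q_pos in \<open>auto intro: less_imp_le\<close>)

lemma Q_pos_on_compact:
  assumes "a < x" "x \<le> y" "y < b"
  obtains q0 where "q0 > 0" "\<And>t. t \<in> {x..y} \<Longrightarrow> q0 \<le> Q t"
proof -
  have "continuous_on {x..y} Q" by (rule continuous_on_subset[OF cont_Q]) (use assms in auto)
  then obtain t0 where "t0 \<in> {x..y}" "\<And>t. t \<in> {x..y} \<Longrightarrow> Q t0 \<le> Q t"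
    using continuous_attains_inf[of "{x..y}" Q] assms by auto
  with Q_pos[of t0] assms show thesis by (intro that) auto
qed

lemma H_bound:
  obtains M where "M \<ge> 1" "\<And>t. t \<in> {a..b} \<Longrightarrow> \<bar>H t - c\<bar> \<le> M"
proof -
  have "continuous_on {a..b} (\<lambda>t. H t - c)" by (intro continuous_intros cont_H)
  then obtain M where "\<And>t. t \<in> {a..b} \<Longrightarrow> \<bar>H t - c\<bar> \<le> M"
    using continuous_on_compact_bound[of "{a..b}"] by (metis compact_Icc real_norm_def)
  then show thesis by (intro that[of "max M 1"]) force+
qed

definition neg_sol :: "real \<Rightarrow> real \<Rightarrow> real \<Rightarrow> (real \<Rightarrow> real) \<Rightarrow> bool" where
  "neg_sol c s e u \<longleftrightarrow> continuous_on {s..e} u \<and>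
     (\<forall>t\<in>{s<..<e}. u t < 0 \<and> (u has_real_derivative H t - c - Q t / u t) (at t))"

lemma neg_sol_subinterval:
  "neg_sol c s e u \<Longrightarrow> s \<le> s' \<Longrightarrow> e' \<le> e \<Longrightarrow> neg_sol c s' e' u"
  unfolding neg_sol_def by (auto intro: continuous_on_subset)

lemma neg_sol_if_zeta_sol: "zeta_sol Q H s e c u \<Longrightarrow> neg_sol c s e u"
  by (simp add: zeta_sol_def neg_sol_def)

lemma neg_sol_deriv_ge:
  assumes "neg_sol c s e u" "a \<le> s" "e \<le> b" "t \<in> {s<..<e}"
  shows "(u has_real_derivative H t - c - Q t / u t) (at t)" "H t - c \<le> H t - c - Q t / u t"
  using assms Q_nonneg[of t] by (auto simp: neg_sol_def divide_nonneg_neg)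

lemma neg_sol_compare:
  assumes u1: "neg_sol c1 s e u1" and u2: "neg_sol c2 s e u2" and "c1 \<le> c2"
    and "a \<le> s" "e \<le> b" and end_le: "u1 e \<le> u2 e" and x: "x \<in> {s..e}"
  shows "u1 x \<le> u2 x"
proof (rule ccontr)
  assume "\<not> u1 x \<le> u2 x"
  let ?w = "\<lambda>t. u2 t - u1 t"
  have "?w e \<le> ?w x"
  proof (rule le_if_deriv_nonpos_below_level[where u = ?w and \<theta> = 0])
    show "x \<le> e" "continuous_on {x..e} ?w"
      using x u1 u2 by (auto simp: neg_sol_def intro!: continuous_intros elim: continuous_on_subset)
    fix t assume t: "x < t" "t < e"
    then have t': "t \<in> {s<..<e}" using x by auto
    show "(?w has_real_derivative (H t - c2 - Q t / u2 t) - (H t - c1 - Q t / u1 t)) (at t)"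
      using u1 u2 t' by (intro DERIV_diff) (auto simp: neg_sol_def)
    assume "?w t < 0"
    moreover have "u1 t < 0" "u2 t < 0" using u1 u2 t' by (auto simp: neg_sol_def)
    ultimately have "Q t / u1 t \<le> Q t / u2 t"
      using Q_nonneg[of t] t' \<open>a \<le> s\<close> \<open>e \<le> b\<close> by (intro divide_left_mono) (auto intro: mult_neg_neg)
    then show "(H t - c2 - Q t / u2 t) - (H t - c1 - Q t / u1 t) \<le> 0" using \<open>c1 \<le> c2\<close> by simp
  qed (use \<open>\<not> u1 x \<le> u2 x\<close> in simp)
  then show False using end_le \<open>\<not> u1 x \<le> u2 x\<close> by simp
qed

lemma neg_sol_slope:
  assumes u: "neg_sol c s e u" and "a \<le> s" "e \<le> b" and x: "x \<in> {s..e}"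
    and m: "\<And>t. t \<in> {s<..<e} \<Longrightarrow> m \<le> H t - c"
  shows "u x + m * (e - x) \<le> u e"
proof -
  have "u x - m * x \<le> u e - m * e"
  proof (rule DERIV_nonneg_imp_increasing_open[where f = "\<lambda>t. u t - m * t"])
    show "x \<le> e" "continuous_on {x..e} (\<lambda>t. u t - m * t)"
      using x u by (auto simp: neg_sol_def intro!: continuous_intros elim: continuous_on_subset)
    fix t assume "x < t" "t < e"
    then have t: "t \<in> {s<..<e}" using x by auto
    show "\<exists>l. ((\<lambda>t. u t - m * t) has_real_derivative l) (at t) \<and> 0 \<le> l"
      using neg_sol_deriv_ge[OF u \<open>a \<le> s\<close> \<open>e \<le> b\<close> t] m[OF t]
      by (intro exI[of _ "H t - c - Q t / u t - m"] conjI derivative_eq_intros) auto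
  qed
  then show ?thesis by (simp add: algebra_simps)
qed

text \<open>While \<open>|u| < r\<close> the singular term gives \<open>u\<close> slope at least \<open>M\<close>.\<close>
lemma neg_sol_away_from_zero:
  assumes u: "neg_sol c s e u" and "a \<le> s" "s \<le> e" "e \<le> b" "u e \<le> 0" "M > 0" "r > 0"
    and H: "\<And>t. t \<in> {s<..<e} \<Longrightarrow> - M \<le> H t - c"
    and Q: "\<And>t. t \<in> {s<..<e} \<Longrightarrow> 2 * M * r \<le> Q t"
  shows "min r (M * (e - s)) \<le> - u s"
proof (rule ccontr)
  assume start: "\<not> min r (M * (e - s)) \<le> - u s"
  let ?w = "\<lambda>t. - u t + M * t"
  have "?w e \<le> ?w s"
  proof (rule le_if_deriv_nonpos_below_level[where u = ?w and \<theta> = "r + M * s"])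
    show "s \<le> e" "continuous_on {s..e} ?w"
      using assms by (auto simp: neg_sol_def intro!: continuous_intros)
    show "?w s < r + M * s" using start by simp
    fix t assume "s < t" "t < e"
    then have t: "t \<in> {s<..<e}" by simp
    show "(?w has_real_derivative - (H t - c - Q t / u t) + M) (at t)"
      using u t by (auto simp: neg_sol_def intro!: derivative_eq_intros)
    assume "?w t < r + M * s"
    moreover have "M * s < M * t" using t \<open>M > 0\<close> by simp
    ultimately have small: "- u t < r" by linarith
    have neg: "u t < 0" using u t by (simp add: neg_sol_def)
    have "2 * M * (- u t) \<le> Q t"
      using mult_left_mono[of "- u t" r "2 * M"] small \<open>M > 0\<close> Q[OF t] by linarith
    then have "2 * M \<le> Q t / (- u t)" using neg by (subst pos_le_divide_eq) auto
    then show "- (H t - c - Q t / u t) + M \<le> 0" using H[OF t] by simp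
  qed
  then show False using start \<open>u e \<le> 0\<close> by (simp add: algebra_simps)
qed

lemma neg_sol_nonpos:
  assumes "neg_sol c s e u" "s < e" "x \<in> {s..e}"
  shows "u x \<le> 0"
  using continuous_le_on_closure[of "{s<..<e}" u x 0] assms by (auto simp: neg_sol_def less_imp_le)

lemma zeta_sol_subinterval: "zeta_sol Q H s e c u \<Longrightarrow> s \<le> s' \<Longrightarrow> zeta_sol Q H s' e c u"
  unfolding zeta_sol_def by (auto intro: continuous_on_subset)

lemma zeta_sol_compare:
  assumes "zeta_sol Q H s b c1 u1" "zeta_sol Q H s b c2 u2" "c1 \<le> c2" "a \<le> s" "x \<in> {s..b}"
  shows "u1 x \<le> u2 x"
  using neg_sol_compare[OF neg_sol_if_zeta_sol neg_sol_if_zeta_sol] assms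
  by (auto simp: zeta_sol_def)

lemma zeta_sol_unique:
  assumes "zeta_sol Q H s b c u1" "zeta_sol Q H s b c u2" "a \<le> s" "x \<in> {s..b}"
  shows "u1 x = u2 x"
  using zeta_sol_compare[OF assms(1,2)] zeta_sol_compare[OF assms(2,1)] assms(3,4) by force

lemma zeta_sol_cong:
  assumes "zeta_sol Q H s e c u" "\<And>t. t \<in> {s..e} \<Longrightarrow> v t = u t" "s \<le> e"
  shows "zeta_sol Q H s e c v"
  unfolding zeta_sol_def
proof (intro conjI ballI)
  show "continuous_on {s..e} v" using assms continuous_on_eq by (force simp: zeta_sol_def)
  fix t assume t: "t \<in> {s<..<e}"
  show "v t < 0" using assms t by (simp add: zeta_sol_def)
  have "(u has_real_derivative H t - c - Q t / v t) (at t)" using assms t by (simp add: zeta_sol_def)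
  then show "(v has_real_derivative H t - c - Q t / v t) (at t)"
    by (rule has_field_derivative_transform_within_open[where S = "{s<..<e}"]) (use t assms in auto)
qed (use assms in \<open>auto simp: zeta_sol_def\<close>)

lemma zeta_sol_speed_lipschitz:
  assumes u1: "zeta_sol Q H s b c1 u1" and u2: "zeta_sol Q H s b c2 u2" "c1 \<le> c2" "a \<le> s" "s \<le> b"
  shows "u2 s - u1 s \<le> (c2 - c1) * (b - s)"
proof -
  let ?g = "\<lambda>t. u2 t - u1 t + (c2 - c1) * t"
  have "?g s \<le> ?g b"
  proof (rule DERIV_nonneg_imp_increasing_open[where f = ?g, OF \<open>s \<le> b\<close>])
    show "continuous_on {s..b} ?g" using u1 u2 by (auto simp: zeta_sol_def intro!: continuous_intros)
    fix t assume "s < t" "t < b"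
    then have t: "t \<in> {s..b}" "t \<in> {s<..<b}" by auto
    have "u1 t \<le> u2 t" "u2 t < 0" using zeta_sol_compare[OF u1 u2(1)] assms t u2 by (auto simp: zeta_sol_def)
    then have "Q t / u2 t \<le> Q t / u1 t"
      using Q_nonneg[of t] t \<open>a \<le> s\<close> by (intro divide_left_mono) (auto intro: mult_neg_neg)
    moreover have "(?g has_real_derivative
        (H t - c2 - Q t / u2 t) - (H t - c1 - Q t / u1 t) + (c2 - c1) * 1) (at t)"
      using u1 u2 t by (intro DERIV_add DERIV_diff DERIV_cmult DERIV_ident) (auto simp: zeta_sol_def)
    ultimately show "\<exists>l. (?g has_real_derivative l) (at t) \<and> 0 \<le> l" by force
  qed
  then show ?thesis using u1 u2 by (simp add: zeta_sol_def algebra_simps)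
qed

lemma zeta_sol_lower_bound:
  assumes u: "zeta_sol Q H s b c u" and "a \<le> s" "s \<le> b" "M \<ge> 0" "QM \<ge> 0"
    and H: "\<And>t. t \<in> {s..b} \<Longrightarrow> H t - c \<le> M" and Q: "\<And>t. t \<in> {s..b} \<Longrightarrow> Q t \<le> QM"
  shows "- (QM + 1) - (M + 1) * (b - s) \<le> u s"
proof (rule ccontr)
  assume start: "\<not> ?thesis"
  let ?v = "\<lambda>t. u t - (M + 1) * t"
  have "?v b \<le> ?v s"
  proof (rule le_if_deriv_nonpos_below_level[where u = ?v and \<theta> = "- (QM + 1) - (M + 1) * b"])
    show "s \<le> b" "continuous_on {s..b} ?v"
      using assms by (auto simp: zeta_sol_def intro!: continuous_intros)
    show "?v s < - (QM + 1) - (M + 1) * b" using start by (simp add: algebra_simps)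
    fix t assume "s < t" "t < b"
    then have t: "t \<in> {s<..<b}" by simp
    show "(?v has_real_derivative (H t - c - Q t / u t) - (M + 1)) (at t)"
      using u t by (auto simp: zeta_sol_def intro!: derivative_eq_intros)
    assume "?v t < - (QM + 1) - (M + 1) * b"
    moreover have "(M + 1) * t \<le> (M + 1) * b" using t \<open>M \<ge> 0\<close> by simp
    ultimately have "u t < - (QM + 1)" by linarith
    moreover have "Q t \<le> QM" using Q[of t] t by simp
    ultimately have "- 1 < Q t / u t" using \<open>QM \<ge> 0\<close> by (simp add: neg_less_divide_eq)
    then show "(H t - c - Q t / u t) - (M + 1) \<le> 0" using H[of t] t by simp
  qed
  then show False using start u \<open>QM \<ge> 0\<close> by (simp add: zeta_sol_def algebra_simps)
qed

definition reg_sol :: "real \<Rightarrow> real \<Rightarrow> real \<Rightarrow> (real \<Rightarrow> real) \<Rightarrow> bool" where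
  "reg_sol c s \<epsilon> u \<longleftrightarrow> neg_sol c s b u \<and> u b = - \<epsilon>"

text \<open>Truncating the singular term at \<open>-\<rho>\<close> makes the right-hand side Lipschitz.\<close>
definition trunc_sol :: "real \<Rightarrow> real \<Rightarrow> real \<Rightarrow> real \<Rightarrow> (real \<Rightarrow> real) \<Rightarrow> bool" where
  "trunc_sol c s \<epsilon> \<rho> u \<longleftrightarrow> continuous_on {s..b} u \<and> u b = - \<epsilon> \<and>
     (\<forall>t\<in>{s..b}. (u has_real_derivative H t - c - Q t / min (u t) (- \<rho>)) (at t within {s..b}))"

lemma trunc_sol_exists:
  assumes "a \<le> s" "s < b" "\<rho> > 0"
  shows "\<exists>u. trunc_sol c s \<epsilon> \<rho> u"
proof -
  interpret ivp: backward_lipschitz_ivp s b "- \<epsilon>" "1 / \<rho>\<^sup>2" "\<lambda>t. H t - c" Q "\<lambda>z. - 1 / min z (- \<rho>)"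
  proof
    show "continuous_on {s..b} (\<lambda>t. H t - c)" "continuous_on {s..b} Q"
      using assms by (auto intro!: continuous_intros intro: continuous_on_subset[OF cont_H]
          continuous_on_subset[OF cont_Q])
  qed (use assms lipschitz_on_inverse_truncated in auto)
  show ?thesis
    using ivp.solution_exists by (auto simp: trunc_sol_def)
qed

lemma trunc_sol_tail:
  assumes u: "trunc_sol c s \<epsilon> \<rho> u" and "s \<le> \<sigma>" and below: "\<And>t. t \<in> {\<sigma><..<b} \<Longrightarrow> u t < - \<rho>"
    and "\<rho> > 0"
  shows "neg_sol c \<sigma> b u"
  unfolding neg_sol_def
proof (intro conjI ballI)
  show "continuous_on {\<sigma>..b} u" using u \<open>s \<le> \<sigma>\<close> by (auto simp: trunc_sol_def elim: continuous_on_subset)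
  fix t assume t: "t \<in> {\<sigma><..<b}"
  show "u t < 0" using below[OF t] \<open>\<rho> > 0\<close> by simp
  have "(u has_real_derivative H t - c - Q t / min (u t) (- \<rho>)) (at t within {s..b})"
    using u t \<open>s \<le> \<sigma>\<close> by (auto simp: trunc_sol_def)
  moreover have "at t within {s..b} = at t" using t \<open>s \<le> \<sigma>\<close> by (intro at_within_Icc_at) auto
  ultimately show "(u has_real_derivative H t - c - Q t / u t) (at t)"
    using below[OF t] by (simp add: min_def)
qed

text \<open>Near \<open>b\<close> the truncation is inactive because \<open>u\<close> grows at most linearly from \<open>-\<epsilon>\<close>;
  away from \<open>b\<close> the level \<open>-\<rho>\<close> repels, since there \<open>Q/\<rho>\<close> dominates \<open>|H - c|\<close>.\<close>
lemma trunc_sol_below: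
  assumes u: "trunc_sol c s \<epsilon> \<rho> u" and "a \<le> s" "s < b" "\<rho> > 0" "4 * \<rho> \<le> \<epsilon>" "M > 0"
    and H: "\<And>t. t \<in> {s..b} \<Longrightarrow> \<bar>H t - c\<bar> \<le> M"
    and Q: "\<And>t. t \<in> {s..b} \<Longrightarrow> t \<le> b - \<epsilon> / (2 * M) \<Longrightarrow> 2 * M * \<rho> \<le> Q t"
    and x: "x \<in> {s..b}"
  shows "u x < - \<rho>"
proof (rule ccontr)
  assume "\<not> u x < - \<rho>"
  moreover have "continuous_on {x..b} u" using u x by (auto simp: trunc_sol_def elim: continuous_on_subset)
  ultimately obtain \<sigma> where \<sigma>: "x \<le> \<sigma>" "\<sigma> < b" "u \<sigma> = - \<rho>"
    and after: "\<And>t. \<sigma> < t \<Longrightarrow> t \<le> b \<Longrightarrow> u t < - \<rho>"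
    using last_crossing[of x b u "- \<rho>"] x u assms by (auto simp: trunc_sol_def)
  show False
  proof (cases "\<sigma> \<le> b - \<epsilon> / (2 * M)")
    case False
    have "neg_sol c \<sigma> b u" by (rule trunc_sol_tail[OF u]) (use \<sigma> x after assms in auto)
    moreover have "- M \<le> H t - c" if "t \<in> {\<sigma><..<b}" for t
      using H[of t] that \<sigma> x by (auto simp: abs_le_iff)
    ultimately have "u \<sigma> + (- M) * (b - \<sigma>) \<le> u b"
      using \<sigma> x assms by (intro neg_sol_slope[where s = \<sigma> and c = c and x = \<sigma>]) auto
    moreover have "M * (b - \<sigma>) \<le> \<epsilon> / 2"
      using False \<open>M > 0\<close> by (simp add: field_simps)
    ultimately show False using \<sigma>(3) u assms by (simp add: trunc_sol_def)
  next
    case True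
    have "\<sigma> \<in> {s..b}" using \<sigma> x by auto
    then have "(u has_real_derivative H \<sigma> - c - Q \<sigma> / min (u \<sigma>) (- \<rho>)) (at \<sigma> within {s..b})"
      using u by (simp add: trunc_sol_def)
    then have "(u has_real_derivative H \<sigma> - c + Q \<sigma> / \<rho>) (at \<sigma> within {s..b})"
      using \<sigma>(3) by simp
    moreover have "0 < H \<sigma> - c + Q \<sigma> / \<rho>"
    proof -
      have "2 * M \<le> Q \<sigma> / \<rho>" using Q[OF \<open>\<sigma> \<in> {s..b}\<close> True] \<open>\<rho> > 0\<close> by (simp add: pos_le_divide_eq)
      then show ?thesis using H[OF \<open>\<sigma> \<in> {s..b}\<close>] \<open>M > 0\<close> by linarith
    qed
    ultimately obtain d where "d > 0" and inc: "\<And>h. 0 < h \<Longrightarrow> \<sigma> + h \<in> {s..b} \<Longrightarrow> h < d \<Longrightarrow> u \<sigma> < u (\<sigma> + h)"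
      by (metis has_real_derivative_pos_inc_right)
    define h where "h = min (d / 2) (b - \<sigma>)"
    have "0 < h" "\<sigma> + h \<in> {s..b}" "h < d" using \<open>d > 0\<close> \<sigma> x by (auto simp: h_def)
    then show False using inc after[of "\<sigma> + h"] \<sigma>(3) by fastforce
  qed
qed

lemma reg_sol_exists:
  assumes "a < s" "s < b" "\<epsilon> > 0"
  shows "\<exists>u. reg_sol c s \<epsilon> u"
proof -
  obtain M where M: "M \<ge> 1" "\<And>t. t \<in> {a..b} \<Longrightarrow> \<bar>H t - c\<bar> \<le> M" using H_bound[where c = c] by blast
  define e where "e = max s (b - \<epsilon> / (2 * M))"
  have e: "s \<le> e" "e < b" using assms M by (auto simp: e_def)
  obtain q0 where q0: "q0 > 0" "\<And>t. t \<in> {s..e} \<Longrightarrow> q0 \<le> Q t"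
    using Q_pos_on_compact[OF \<open>a < s\<close> e] by blast
  define \<rho> where "\<rho> = min (\<epsilon> / 4) (q0 / (2 * M))"
  have "2 * M * \<rho> \<le> 2 * M * (q0 / (2 * M))" using M by (intro mult_left_mono) (auto simp: \<rho>_def)
  then have \<rho>: "\<rho> > 0" "4 * \<rho> \<le> \<epsilon>" "2 * M * \<rho> \<le> q0"
    using assms q0 M by (auto simp: \<rho>_def)
  obtain u where u: "trunc_sol c s \<epsilon> \<rho> u" using trunc_sol_exists assms \<rho> by fastforce
  have "u t < - \<rho>" if "t \<in> {s..b}" for t
  proof (rule trunc_sol_below[OF u _ _ \<rho>(1,2) _ M(2) _ that])
    show "2 * M * \<rho> \<le> Q t'" if "t' \<in> {s..b}" "t' \<le> b - \<epsilon> / (2 * M)" for t'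
      using q0(2)[of t'] \<rho>(3) that by (auto simp: e_def)
  qed (use assms M in auto)
  then have "neg_sol c s b u" using trunc_sol_tail[OF u order_refl] \<rho> by auto
  then show ?thesis using u by (auto simp: reg_sol_def trunc_sol_def)
qed

lemma reg_sol_mono:
  assumes "reg_sol c s \<epsilon>1 u1" "reg_sol c s \<epsilon>2 u2" "\<epsilon>2 \<le> \<epsilon>1" "a \<le> s" "x \<in> {s..b}"
  shows "u1 x \<le> u2 x"
  using neg_sol_compare[of c s b u1 c u2] assms by (auto simp: reg_sol_def)

lemma reg_sol_bounded_away_from_zero:
  assumes "a < s" "s \<le> y" "y < b"
  obtains \<eta> where "\<eta> > 0" "\<And>\<epsilon> u t. reg_sol c s \<epsilon> u \<Longrightarrow> t \<in> {s..y} \<Longrightarrow> u t \<le> - \<eta>"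
proof -
  obtain M where M: "M \<ge> 1" "\<And>t. t \<in> {a..b} \<Longrightarrow> \<bar>H t - c\<bar> \<le> M" using H_bound[where c = c] by blast
  define e where "e = (y + b) / 2"
  have e: "y < e" "e < b" using assms by (auto simp: e_def)
  obtain q0 where q0: "q0 > 0" "\<And>t. t \<in> {s..e} \<Longrightarrow> q0 \<le> Q t"
    using Q_pos_on_compact[OF \<open>a < s\<close> _ \<open>e < b\<close>] e assms by auto
  define r where "r = q0 / (2 * M)"
  show thesis
  proof (rule that[of "min r (M * (e - y))"])
    show "min r (M * (e - y)) > 0" using q0 M e by (simp add: r_def)
    fix \<epsilon> u t assume u: "reg_sol c s \<epsilon> u" and t: "t \<in> {s..y}"
    have "e \<in> {s<..<b}" using e assms by auto
    then have "u e \<le> 0" using u by (auto simp: reg_sol_def neg_sol_def intro: less_imp_le)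
    moreover have "neg_sol c t e u" using u t e by (auto simp: reg_sol_def intro: neg_sol_subinterval)
    moreover have "- M \<le> H \<tau> - c" "2 * M * r \<le> Q \<tau>" if "\<tau> \<in> {t<..<e}" for \<tau>
    proof -
      have "\<tau> \<in> {a..b}" "\<tau> \<in> {s..e}" using that t e assms by auto
      then show "- M \<le> H \<tau> - c" "2 * M * r \<le> Q \<tau>"
        using M(2) q0(2) M by (force simp: r_def abs_le_iff)+
    qed
    ultimately have "min r (M * (e - t)) \<le> - u t"
      using t e assms M q0 by (intro neg_sol_away_from_zero) (auto simp: r_def)
    moreover have "M * (e - y) \<le> M * (e - t)" using t M by simp
    ultimately show "u t \<le> - min r (M * (e - y))" by linarith
  qed
qed

lemma neg_sol_limit_has_integral:
  assumes "a \<le> s" "s \<le> x" "x \<le> y" "y \<le> b"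
    and sol: "\<And>n. neg_sol c s y (v n)" and lim: "\<And>t. t \<in> {s..y} \<Longrightarrow> (\<lambda>n. v n t) \<longlonglongrightarrow> V t"
    and "\<eta> > 0" and away: "\<And>n t. t \<in> {s..y} \<Longrightarrow> v n t \<le> - \<eta>"
  shows "((\<lambda>t. H t - c - Q t / V t) has_integral V y - V x) {x..y}"
proof -
  obtain M where M: "M \<ge> 1" "\<And>t. t \<in> {a..b} \<Longrightarrow> \<bar>H t - c\<bar> \<le> M"
    using H_bound[where c = c] by blast
  obtain QM where QM: "\<And>t. t \<in> {a..b} \<Longrightarrow> \<bar>Q t\<bar> \<le> QM"
    using continuous_on_compact_bound[OF compact_Icc cont_Q] by (metis real_norm_def)
  show ?thesis
  proof (rule has_integral_dominated_convergence[where h = "\<lambda>t. M + QM / \<eta>"])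
    show "(\<lambda>t. M + QM / \<eta>) integrable_on {x..y}" by (rule integrable_const_ivl)
    fix n
    have sol': "neg_sol c x y (v n)" using sol assms by (blast intro: neg_sol_subinterval)
    show "((\<lambda>t. H t - c - Q t / v n t) has_integral v n y - v n x) {x..y}"
      using sol' \<open>x \<le> y\<close> by (intro fundamental_theorem_of_calculus_interior)
        (auto simp: neg_sol_def has_real_derivative_iff_has_vector_derivative[symmetric])
    show "\<forall>t\<in>{x..y}. norm (H t - c - Q t / v n t) \<le> M + QM / \<eta>"
    proof
      fix t assume t: "t \<in> {x..y}"
      then have t': "t \<in> {a..b}" "t \<in> {s..y}" using assms by auto
      have "\<bar>Q t\<bar> / \<bar>v n t\<bar> \<le> QM / \<eta>"
        using QM[OF t'(1)] away[OF t'(2), of n] \<open>\<eta> > 0\<close> by (intro frac_le) auto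
      then have "\<bar>Q t / v n t\<bar> \<le> QM / \<eta>" by (simp add: abs_divide)
      then show "norm (H t - c - Q t / v n t) \<le> M + QM / \<eta>"
        using M(2)[OF t'(1)] abs_triangle_ineq4[of "H t - c" "Q t / v n t"] by simp
    qed
  next
    show "\<forall>t\<in>{x..y}. (\<lambda>n. H t - c - Q t / v n t) \<longlonglongrightarrow> H t - c - Q t / V t"
    proof
      fix t assume "t \<in> {x..y}"
      then have t: "t \<in> {s..y}" using assms by auto
      have "V t \<le> - \<eta>" using LIMSEQ_le_const2[OF lim[OF t]] away[OF t] by blast
      then show "(\<lambda>n. H t - c - Q t / v n t) \<longlonglongrightarrow> H t - c - Q t / V t"
        using \<open>\<eta> > 0\<close> by (intro tendsto_intros lim[OF t]) auto
    qed
    show "(\<lambda>n. v n y - v n x) \<longlonglongrightarrow> V y - V x" using assms by (intro tendsto_diff lim) auto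
  qed
qed

lemma neg_sol_limit:
  assumes "a \<le> s" "s < y" "y \<le> b"
    and sol: "\<And>n. neg_sol c s y (v n)" and lim: "\<And>t. t \<in> {s..y} \<Longrightarrow> (\<lambda>n. v n t) \<longlonglongrightarrow> V t"
    and "\<eta> > 0" and away: "\<And>n t. t \<in> {s..y} \<Longrightarrow> v n t \<le> - \<eta>"
  shows "neg_sol c s y V"
proof -
  let ?G = "\<lambda>t. H t - c - Q t / V t"
  have int: "(?G has_integral V y - V x) {x..y}" if "x \<in> {s..y}" for x
    using neg_sol_limit_has_integral[OF _ _ _ _ sol lim \<open>\<eta> > 0\<close> away] that assms by auto
  then have V: "V x = V y - integral {x..y} ?G" if "x \<in> {s..y}" for x
    using integral_unique[OF int[OF that]] by simp
  have "?G integrable_on {s..y}" using int[of s] assms by auto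
  then have "continuous_on {s..y} (\<lambda>x. V y - integral {x..y} ?G)"
    by (intro continuous_intros indefinite_integral_continuous_1')
  then have cont_V: "continuous_on {s..y} V" by (rule continuous_on_eq) (use V in metis)
  have neg: "V t \<le> - \<eta>" if "t \<in> {s..y}" for t
    using LIMSEQ_le_const2[OF lim[OF that]] away[OF that] by blast
  have "continuous_on {s..y} H" "continuous_on {s..y} Q"
    using assms by (auto intro: continuous_on_subset[OF cont_H] continuous_on_subset[OF cont_Q])
  moreover have "\<forall>t\<in>{s..y}. V t \<noteq> 0" using neg \<open>\<eta> > 0\<close> by force
  ultimately have cont_G: "continuous_on {s..y} ?G" by (intro continuous_intros cont_V)
  show ?thesis
    unfolding neg_sol_def
  proof (intro conjI ballI cont_V)
    fix t assume t: "t \<in> {s<..<y}"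
    show "V t < 0" using neg[of t] t \<open>\<eta> > 0\<close> by auto
    have "((\<lambda>x. V y - integral {x..y} ?G) has_real_derivative 0 - - ?G t) (at t within {s..y})"
      using t by (intro derivative_intros integral_has_real_derivative'[OF cont_G]) auto
    moreover have "at t within {s..y} = at t" using t by (intro at_within_Icc_at) auto
    ultimately have "((\<lambda>x. V y - integral {x..y} ?G) has_real_derivative ?G t) (at t)" by simp
    then show "(V has_real_derivative ?G t) (at t)"
      by (rule has_field_derivative_transform_within_open[where S = "{s<..<y}"])
        (use t V[symmetric] in auto)
  qed
qed

lemma zeta_sol_if_neg_sol_on_initial_segments:
  assumes "s < b" and sol: "\<And>y. s < y \<Longrightarrow> y < b \<Longrightarrow> neg_sol c s y u"
    and "continuous (at b within {s..b}) u" and "u b = 0"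
  shows "zeta_sol Q H s b c u"
  unfolding zeta_sol_def
proof (intro conjI ballI \<open>u b = 0\<close>)
  show "continuous_on {s..b} u"
    unfolding continuous_on_eq_continuous_within
  proof
    fix x assume x: "x \<in> {s..b}"
    show "continuous (at x within {s..b}) u"
    proof (cases "x < b")
      case True
      define y where "y = (x + b) / 2"
      have y: "s < y" "y < b" "x < y" using x True by (auto simp: y_def)
      have "continuous (at x within {s..y}) u"
        using sol[OF y(1,2)] x y by (simp add: neg_sol_def continuous_on_eq_continuous_within)
      moreover have "at x within {s..b} = at x within {s..y}"
        by (rule at_within_nhd[of x "{..<y}"]) (use y in auto)
      ultimately show ?thesis by simp
    qed (use x assms in auto)
  qed
  fix t assume t: "t \<in> {s<..<b}"
  then have "neg_sol c s ((t + b) / 2) u" "t \<in> {s<..<(t + b) / 2}" using sol by auto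
  then show "u t < 0" "(u has_real_derivative H t - c - Q t / u t) (at t)"
    by (auto simp: neg_sol_def)
qed

lemma zeta_sol_exists_inner:
  assumes "a < s" "s < b"
  shows "\<exists>u. zeta_sol Q H s b c u"
proof -
  define \<epsilon> where "\<epsilon> n = inverse (real (Suc n))" for n
  define v where "v n = (SOME u. reg_sol c s (\<epsilon> n) u)" for n
  have reg: "reg_sol c s (\<epsilon> n) (v n)" for n
    using someI_ex[OF reg_sol_exists[OF assms, of "\<epsilon> n" c]] by (simp add: v_def \<epsilon>_def)
  have inc: "incseq (\<lambda>n. v n t)" if "t \<in> {s..b}" for t
    using reg_sol_mono[OF reg reg] that assms by (intro incseq_SucI) (simp add: \<epsilon>_def field_simps)
  have nonpos: "v n t \<le> 0" if "t \<in> {s..b}" for n t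
    using neg_sol_nonpos[of c s b "v n" t] reg[of n] that assms by (simp add: reg_sol_def)
  define V where "V t = (SUP n. v n t)" for t
  have lim: "(\<lambda>n. v n t) \<longlonglongrightarrow> V t" if "t \<in> {s..b}" for t
    unfolding V_def using nonpos[OF that] by (intro LIMSEQ_incseq_SUP inc[OF that] bdd_aboveI) auto
  have le: "v n t \<le> V t" if "t \<in> {s..b}" for n t
    using incseq_le[OF inc lim] that by blast
  have V_nonpos: "V t \<le> 0" if "t \<in> {s..b}" for t
    using LIMSEQ_le_const2[OF lim[OF that]] nonpos[OF that] by blast
  have lim_b: "(\<lambda>n. v n b) \<longlonglongrightarrow> 0"
    using reg tendsto_minus[OF LIMSEQ_inverse_real_of_nat] by (simp add: reg_sol_def \<epsilon>_def)
  then have "V b = 0" using lim[of b] assms LIMSEQ_unique by auto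
  show ?thesis
  proof (intro exI zeta_sol_if_neg_sol_on_initial_segments[OF \<open>s < b\<close>])
    fix y assume y: "s < y" "y < b"
    obtain \<eta> where "\<eta> > 0" and away: "\<And>\<epsilon> u t. reg_sol c s \<epsilon> u \<Longrightarrow> t \<in> {s..y} \<Longrightarrow> u t \<le> - \<eta>"
      using reg_sol_bounded_away_from_zero[OF \<open>a < s\<close> _ \<open>y < b\<close>] y by auto
    show "neg_sol c s y V"
    proof (rule neg_sol_limit[where v = v, OF _ y(1) _ _ _ \<open>\<eta> > 0\<close>])
      show "neg_sol c s y (v n)" for n using reg[of n] y by (auto simp: reg_sol_def intro: neg_sol_subinterval)
      show "v n t \<le> - \<eta>" if "t \<in> {s..y}" for n t using away[OF reg that] .
    qed (use assms y lim in auto)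
  next
    show "continuous (at b within {s..b}) V"
    proof (rule continuous_within_squeeze_below[where v = v])
      show "continuous (at b within {s..b}) (v n)" for n
        using reg[of n] assms by (simp add: reg_sol_def neg_sol_def continuous_on_eq_continuous_within)
      show "(\<lambda>n. v n b) \<longlonglongrightarrow> V b" using lim_b \<open>V b = 0\<close> by simp
    qed (use le V_nonpos \<open>V b = 0\<close> in auto)
  qed (rule \<open>V b = 0\<close>)
qed

lemma zeta_sol_if_zeta_sol_on_final_segments:
  assumes "s < b" and sol: "\<And>s'. s < s' \<Longrightarrow> s' < b \<Longrightarrow> zeta_sol Q H s' b c u"
    and cont: "continuous (at s within {s..b}) u"
  shows "zeta_sol Q H s b c u"
  unfolding zeta_sol_def
proof (intro conjI ballI)
  show "continuous_on {s..b} u"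
    unfolding continuous_on_eq_continuous_within
  proof
    fix x assume x: "x \<in> {s..b}"
    show "continuous (at x within {s..b}) u"
    proof (cases "s < x")
      case True
      define s' where "s' = (s + x) / 2"
      have s': "s < s'" "s' < b" "s' < x" using x True by (auto simp: s'_def)
      have "continuous (at x within {s'..b}) u"
        using sol[OF s'(1,2)] x s' by (simp add: zeta_sol_def continuous_on_eq_continuous_within)
      moreover have "at x within {s..b} = at x within {s'..b}"
        by (rule at_within_nhd[of x "{s'<..}"]) (use s' in auto)
      ultimately show ?thesis by simp
    qed (use x cont in auto)
  qed
  show "u b = 0" using sol[of "(s + b) / 2"] \<open>s < b\<close> by (simp add: zeta_sol_def)
  fix t assume t: "t \<in> {s<..<b}"
  then have "zeta_sol Q H ((s + t) / 2) b c u" "t \<in> {(s + t) / 2<..<b}" using sol by auto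
  then show "u t < 0" "(u has_real_derivative H t - c - Q t / u t) (at t)"
    by (auto simp: zeta_sol_def)
qed

lemma zeta_sol_exists_punctured:
  obtains u where "\<And>s. a < s \<Longrightarrow> s < b \<Longrightarrow> zeta_sol Q H s b c u"
proof -
  define U where "U s = (SOME u. zeta_sol Q H s b c u)" for s
  have U: "zeta_sol Q H s b c (U s)" if "a < s" "s < b" for s
    using someI_ex[OF zeta_sol_exists_inner[OF that]] by (simp add: U_def)
  define u where "u x = U ((a + x) / 2) x" for x
  have "zeta_sol Q H s b c u" if s: "a < s" "s < b" for s
  proof (rule zeta_sol_cong[OF U[OF s]])
    fix x assume x: "x \<in> {s..b}"
    define m where "m = max s ((a + x) / 2)"
    have m: "a < (a + x) / 2" "(a + x) / 2 < b" "a \<le> m" "x \<in> {m..b}" "s \<le> m" "(a + x) / 2 \<le> m"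
      using x s by (auto simp: m_def)
    have "zeta_sol Q H m b c (U ((a + x) / 2))" "zeta_sol Q H m b c (U s)"
      using zeta_sol_subinterval[OF U[OF m(1,2)] m(6)] zeta_sol_subinterval[OF U[OF s] m(5)] .
    from zeta_sol_unique[OF this m(3,4)] show "u x = U s x" by (simp add: u_def)
  qed (use s in simp)
  then show thesis by (rule that)
qed

text \<open>On \<open>(a,b)\<close> the solution has slope at least \<open>-M\<close> and stays bounded, so \<open>u t + M t\<close> is
  monotone and bounded below.\<close>
lemma zeta_sol_punctured_tendsto:
  assumes u: "\<And>s. a < s \<Longrightarrow> s < b \<Longrightarrow> zeta_sol Q H s b c u"
  obtains L where "(u \<longlongrightarrow> L) (at a within {a..b})"
proof -
  obtain M where M: "M \<ge> 1" "\<And>t. t \<in> {a..b} \<Longrightarrow> \<bar>H t - c\<bar> \<le> M"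
    using H_bound[where c = c] by blast
  obtain QM where QM: "QM \<ge> 0" "\<And>t. t \<in> {a..b} \<Longrightarrow> \<bar>Q t\<bar> \<le> QM"
    using continuous_on_compact_bound[OF compact_Icc cont_Q] by (metis real_norm_def)
  let ?f = "\<lambda>t. u t + M * t"
  have mono: "?f t1 \<le> ?f t2" if "t1 \<in> {..<b}" "t2 \<in> {..<b}" "a < t1" "t1 \<le> t2" for t1 t2
  proof -
    have "neg_sol c t1 t2 u"
      using neg_sol_subinterval[OF neg_sol_if_zeta_sol[OF u[of t1]] order_refl, of t2] that by simp
    moreover have "- M \<le> H t - c" if "t \<in> {t1<..<t2}" for t
    proof -
      have "t \<in> {a..b}" using that \<open>a < t1\<close> \<open>t2 \<in> {..<b}\<close> by auto
      from M(2)[OF this] show ?thesis by (simp add: abs_le_iff)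
    qed
    ultimately have "u t1 + (- M) * (t2 - t1) \<le> u t2"
      using that by (intro neg_sol_slope) auto
    then show ?thesis by (simp add: algebra_simps)
  qed
  have bound: "- (QM + 1) - (M + 1) * (b - a) + M * a \<le> ?f t" if "t \<in> {..<b}" "a < t" for t
  proof -
    have "- (QM + 1) - (M + 1) * (b - t) \<le> u t"
      using that M QM by (intro zeta_sol_lower_bound[OF u]) (auto simp: abs_le_iff)
    moreover have "(M + 1) * (b - t) \<le> (M + 1) * (b - a)" "M * a \<le> M * t" using that M by auto
    ultimately show ?thesis by linarith
  qed
  have "at a within {a..b} = at a within {a<..} \<inter> {..<b}"
    by (rule at_within_nhd[of a "{..<b}"]) (use ab in auto)
  then have "(?f \<longlongrightarrow> Inf (?f ` ({a<..} \<inter> {..<b}))) (at a within {a..b})"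
    using mono bound by (simp only:) (rule Lim_right_bound)
  from tendsto_diff[OF this tendsto_mult_left[where c = M, OF tendsto_ident_at]]
  have "(u \<longlongrightarrow> Inf (?f ` ({a<..} \<inter> {..<b})) - M * a) (at a within {a..b})" by simp
  then show thesis by (rule that)
qed

theorem zeta_sol_exists: "\<exists>u. zeta_sol Q H a b c u"
proof -
  obtain u where u: "\<And>s. a < s \<Longrightarrow> s < b \<Longrightarrow> zeta_sol Q H s b c u"
    using zeta_sol_exists_punctured[where c = c] by blast
  obtain L where lim: "(u \<longlongrightarrow> L) (at a within {a..b})" using zeta_sol_punctured_tendsto[OF u] .
  define v where "v = u(a := L)"
  have "\<forall>\<^sub>F t in at a within {a..b}. u t = v t" by (simp add: v_def eventually_at_filter)
  then have "(v \<longlongrightarrow> L) (at a within {a..b})" by (rule tendsto_cong[THEN iffD1, OF _ lim])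
  then have "continuous (at a within {a..b}) v" by (simp add: continuous_within v_def)
  moreover have "zeta_sol Q H s b c v" if "a < s" "s < b" for s
    by (rule zeta_sol_cong[OF u[OF that]]) (use that in \<open>auto simp: v_def\<close>)
  ultimately have "zeta_sol Q H a b c v"
    by (intro zeta_sol_if_zeta_sol_on_final_segments[OF ab])
  then show ?thesis by blast
qed

definition zeta_left :: "real \<Rightarrow> real" where
  "zeta_left c = (SOME u. zeta_sol Q H a b c u) a"

lemma zeta_left_eq: "zeta_sol Q H a b c u \<Longrightarrow> zeta_left c = u a"
  unfolding zeta_left_def using zeta_sol_unique[OF someI_ex[OF zeta_sol_exists]] ab by auto

lemma zeta_left_nonpos: "zeta_left c \<le> 0"
proof -
  obtain u where "zeta_sol Q H a b c u" using zeta_sol_exists by blast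
  then show ?thesis
    using neg_sol_nonpos[OF neg_sol_if_zeta_sol] ab by (auto simp: zeta_left_eq)
qed

lemma mono_zeta_left: "mono zeta_left"
proof
  fix c1 c2 :: real assume "c1 \<le> c2"
  obtain u1 u2 where "zeta_sol Q H a b c1 u1" "zeta_sol Q H a b c2 u2" using zeta_sol_exists by metis
  then show "zeta_left c1 \<le> zeta_left c2"
    using zeta_sol_compare \<open>c1 \<le> c2\<close> ab by (auto simp: zeta_left_eq)
qed

lemma lipschitz_zeta_left: "(b - a)-lipschitz_on UNIV zeta_left"
proof (rule lipschitz_on_leI)
  fix c1 c2 :: real assume "c1 \<le> c2"
  obtain u1 u2 where "zeta_sol Q H a b c1 u1" "zeta_sol Q H a b c2 u2" using zeta_sol_exists by metis
  then have "zeta_left c2 - zeta_left c1 \<le> (c2 - c1) * (b - a)"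
    using zeta_sol_speed_lipschitz \<open>c1 \<le> c2\<close> ab by (auto simp: zeta_left_eq)
  moreover have "zeta_left c1 \<le> zeta_left c2" using mono_zeta_left \<open>c1 \<le> c2\<close> by (rule monoD)
  ultimately show "dist (zeta_left c1) (zeta_left c2) \<le> (b - a) * dist c1 c2"
    using \<open>c1 \<le> c2\<close> by (simp add: dist_real_def mult.commute)
qed (use ab in simp)

lemma zeta_left_unbounded_below:
  obtains c where "c \<le> c0" "zeta_left c \<le> K"
proof -
  obtain B where B: "\<And>t. t \<in> {a..b} \<Longrightarrow> \<bar>H t\<bar> \<le> B"
    using continuous_on_compact_bound[OF compact_Icc cont_H] by (metis real_norm_def)
  define c where "c = min c0 (K / (b - a) - B)"
  obtain u where u: "zeta_sol Q H a b c u" using zeta_sol_exists by blast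
  have "- B - c \<le> H t - c" if "t \<in> {a<..<b}" for t
    using B[of t] that by (simp add: abs_le_iff)
  then have "u a + (- B - c) * (b - a) \<le> u b"
    using ab by (intro neg_sol_slope[OF neg_sol_if_zeta_sol[OF u]]) auto
  moreover have "(c + B) * (b - a) \<le> K"
    using ab by (simp add: c_def pos_le_divide_eq[symmetric] min_le_iff_disj)
  ultimately have "zeta_left c \<le> K"
    using u zeta_left_eq[OF u] by (simp add: zeta_sol_def algebra_simps)
  then show thesis by (intro that[of c]) (simp add: c_def)
qed

lemma zeta_left_neg_iff_ex: "zeta_left c < 0 \<longleftrightarrow> (\<exists>u. zeta_sol Q H a b c u \<and> u a < 0)"
  using zeta_sol_exists[of c] zeta_left_eq by metis

theorem zeta_left_neg_iff: "zeta_left c < 0 \<longleftrightarrow> ereal c < cstar Q H a b"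
proof
  assume neg: "zeta_left c < 0"
  define c' where "c' = c - zeta_left c / (2 * (b - a))"
  have "c < c'" using neg ab by (simp add: c'_def field_simps)
  have "zeta_left c' - zeta_left c \<le> (b - a) * (c' - c)"
    using lipschitz_onD[OF lipschitz_zeta_left, of c' c] \<open>c < c'\<close> by (simp add: dist_real_def)
  also have "\<dots> = - zeta_left c / 2" using ab by (simp add: c'_def field_simps)
  finally have "zeta_left c' < 0" using neg by simp
  then have "ereal c' \<le> cstar Q H a b"
    unfolding cstar_def zeta_left_neg_iff_ex by (blast intro: Sup_upper)
  moreover have "ereal c < ereal c'" using \<open>c < c'\<close> by simp
  ultimately show "ereal c < cstar Q H a b" by (rule order.strict_trans2[rotated])
next
  assume "ereal c < cstar Q H a b"
  then obtain c' where "c < c'" "zeta_left c' < 0"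
    unfolding cstar_def less_Sup_iff zeta_left_neg_iff_ex[symmetric] by auto
  then show "zeta_left c < 0" using monoD[OF mono_zeta_left, of c c'] by simp
qed

end

section \<open>Problem (P)\<close>

locale problem_P =
  fixes \<gamma> \<alpha> :: real and h q :: "real \<Rightarrow> real"
  assumes \<gamma>_pos: "0 < \<gamma>" and \<gamma>_less_\<alpha>: "\<gamma> < \<alpha>" and \<alpha>_less_1: "\<alpha> < 1"
    and cont_h: "continuous_on {0..1} h" and cont_q: "continuous_on {0..1} q"
    and q_neg_left: "\<And>x. 0 < x \<Longrightarrow> x < \<gamma> \<Longrightarrow> q x < 0"
    and q_pos: "\<And>x. \<gamma> < x \<Longrightarrow> x < \<alpha> \<Longrightarrow> q x > 0"
    and q_neg_right: "\<And>x. \<alpha> < x \<Longrightarrow> x < 1 \<Longrightarrow> q x < 0"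
    and q_\<gamma>: "q \<gamma> = 0"
begin

sublocale mid: singular_ode \<gamma> \<alpha> h q
proof
  show "continuous_on {\<gamma>..\<alpha>} h" "continuous_on {\<gamma>..\<alpha>} q"
    using \<gamma>_pos \<alpha>_less_1
    by (auto intro: continuous_on_subset[OF cont_h] continuous_on_subset[OF cont_q])
qed (use \<gamma>_less_\<alpha> q_pos in auto)

sublocale left: singular_ode "1 - \<gamma>" 1 "\<lambda>\<phi>. - h (1 - \<phi>)" "\<lambda>\<phi>. - q (1 - \<phi>)"
proof
  have "continuous_on {0..\<gamma>} h" "continuous_on {0..\<gamma>} q"
    using \<gamma>_less_\<alpha> \<alpha>_less_1 by (auto intro: continuous_on_subset[OF cont_h] continuous_on_subset[OF cont_q])
  from this[THEN continuous_on_reflect, THEN continuous_on_minus]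
  show "continuous_on {1 - \<gamma>..1} (\<lambda>\<phi>. - h (1 - \<phi>))" "continuous_on {1 - \<gamma>..1} (\<lambda>\<phi>. - q (1 - \<phi>))"
    by simp_all
qed (use \<gamma>_pos q_neg_left in auto)

sublocale right: singular_ode 0 "1 - \<alpha>" "\<lambda>\<phi>. h (1 - \<phi>)" "\<lambda>\<phi>. - q (1 - \<phi>)"
proof
  have "continuous_on {\<alpha>..1} h" "continuous_on {\<alpha>..1} q"
    using \<gamma>_pos \<gamma>_less_\<alpha> by (auto intro: continuous_on_subset[OF cont_h] continuous_on_subset[OF cont_q])
  from this[THEN continuous_on_reflect]
  show "continuous_on {0..1 - \<alpha>} (\<lambda>\<phi>. h (1 - \<phi>))" "continuous_on {0..1 - \<alpha>} (\<lambda>\<phi>. - q (1 - \<phi>))"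
    by (simp_all add: continuous_on_minus)
qed (use \<alpha>_less_1 q_neg_right in auto)

lemma prob1_if_probP: "probP \<alpha> h q c z \<Longrightarrow> prob1 \<alpha> h q c z"
  using \<alpha>_less_1 unfolding probP_def prob1_def by (auto intro: continuous_on_subset)

lemma mid_sol_if_prob1: "prob1 \<alpha> h q c z \<Longrightarrow> zeta_sol q h \<gamma> \<alpha> c z"
  using \<gamma>_pos unfolding prob1_def zeta_sol_def by (auto intro: continuous_on_subset)

lemma left_sol_if_prob1:
  assumes z: "prob1 \<alpha> h q c z"
  shows "zeta_sol (\<lambda>\<phi>. - q (1 - \<phi>)) (\<lambda>\<phi>. - h (1 - \<phi>)) (1 - \<gamma>) 1 (- c) (\<lambda>\<phi>. z (1 - \<phi>))"
  unfolding zeta_sol_def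
proof (intro conjI ballI)
  have "continuous_on {0..\<gamma>} z" using z \<gamma>_less_\<alpha> by (auto simp: prob1_def elim: continuous_on_subset)
  from continuous_on_reflect[OF this] show "continuous_on {1 - \<gamma>..1} (\<lambda>\<phi>. z (1 - \<phi>))" by simp
  show "z (1 - 1) = 0" using z by (simp add: prob1_def)
  fix t assume t: "t \<in> {1 - \<gamma><..<1}"
  then have x: "1 - t \<in> {0<..<\<alpha>}" using \<gamma>_less_\<alpha> by auto
  show "z (1 - t) < 0" using z x by (simp add: prob1_def)
  have "(z has_real_derivative h (1 - t) - c - q (1 - t) / z (1 - t)) (at (1 - t))"
    using z x by (simp add: prob1_def)
  from has_real_derivative_reflect[OF this]
  show "((\<lambda>\<phi>. z (1 - \<phi>)) has_real_derivative
      - h (1 - t) - - c - - q (1 - t) / z (1 - t)) (at t)"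
    by (simp add: algebra_simps)
qed

lemma right_sol_if_probP:
  assumes z: "probP \<alpha> h q c z"
  shows "zeta_sol (\<lambda>\<phi>. - q (1 - \<phi>)) (\<lambda>\<phi>. h (1 - \<phi>)) 0 (1 - \<alpha>) c (\<lambda>\<phi>. - z (1 - \<phi>))"
  unfolding zeta_sol_def
proof (intro conjI ballI)
  have "continuous_on {\<alpha>..1} z" using z \<gamma>_pos \<gamma>_less_\<alpha> by (auto simp: probP_def elim: continuous_on_subset)
  from continuous_on_minus[OF continuous_on_reflect[OF this]]
  show "continuous_on {0..1 - \<alpha>} (\<lambda>\<phi>. - z (1 - \<phi>))" by simp
  show "- z (1 - (1 - \<alpha>)) = 0" using z by (simp add: probP_def)
  fix t assume t: "t \<in> {0<..<1 - \<alpha>}"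
  then have x: "1 - t \<in> {\<alpha><..<1}" "1 - t \<in> {0<..<1} - {\<alpha>}" using \<gamma>_pos \<gamma>_less_\<alpha> by auto
  show "- z (1 - t) < 0" using z x by (simp add: probP_def)
  have "(z has_real_derivative h (1 - t) - c - q (1 - t) / z (1 - t)) (at (1 - t))"
    using z x unfolding probP_def by blast
  from DERIV_minus[OF has_real_derivative_reflect[OF this]]
  show "((\<lambda>\<phi>. - z (1 - \<phi>)) has_real_derivative
      h (1 - t) - c - - q (1 - t) / - z (1 - t)) (at t)"
    by (simp add: algebra_simps)
qed

text \<open>Comparison on both halves forces solutions with speeds \<open>c1 < c2\<close> to touch at \<open>\<gamma>\<close>
  with \<open>z1 \<le> z2\<close> to the right; but \<open>q \<gamma> = 0\<close> makes the slope of \<open>z2 - z1\<close> at \<open>\<gamma>\<close>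
  equal to \<open>c1 - c2 < 0\<close>.\<close>
lemma prob1_speed_unique:
  assumes "prob1 \<alpha> h q c1 z1" "prob1 \<alpha> h q c2 z2"
  shows "c1 = c2"
proof -
  have False if z1: "prob1 \<alpha> h q c1 z1" and z2: "prob1 \<alpha> h q c2 z2" and "c1 < c2" for c1 c2 z1 z2
  proof -
    have mid: "z1 x \<le> z2 x" if "x \<in> {\<gamma>..\<alpha>}" for x
      using mid.zeta_sol_compare[OF mid_sol_if_prob1[OF z1] mid_sol_if_prob1[OF z2]] that \<open>c1 < c2\<close>
      by simp
    have "z2 (1 - (1 - \<gamma>)) \<le> z1 (1 - (1 - \<gamma>))"
      using left.zeta_sol_compare[OF left_sol_if_prob1[OF z2] left_sol_if_prob1[OF z1], where x = "1 - \<gamma>"]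
        \<open>c1 < c2\<close> \<gamma>_pos by simp
    then have eq: "z1 \<gamma> = z2 \<gamma>" using mid[of \<gamma>] \<gamma>_less_\<alpha> by simp
    have "\<gamma> \<in> {0<..<\<alpha>}" using \<gamma>_pos \<gamma>_less_\<alpha> by simp
    then have "(z1 has_real_derivative h \<gamma> - c1 - q \<gamma> / z1 \<gamma>) (at \<gamma>)"
      "(z2 has_real_derivative h \<gamma> - c2 - q \<gamma> / z2 \<gamma>) (at \<gamma>)"
      using z1 z2 unfolding prob1_def by blast+
    from DERIV_diff[OF this(2,1)]
    have "((\<lambda>t. z2 t - z1 t) has_real_derivative c1 - c2) (at \<gamma>)" by (simp add: q_\<gamma>)
    from DERIV_neg_dec_right[OF this] \<open>c1 < c2\<close> obtain d where "d > 0"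
      and dec: "\<forall>t>0. t < d \<longrightarrow> z2 (\<gamma> + t) - z1 (\<gamma> + t) < z2 \<gamma> - z1 \<gamma>"
      by auto
    define t where "t = min (d / 2) (\<alpha> - \<gamma>)"
    have "0 < t" "t < d" "\<gamma> + t \<in> {\<gamma>..\<alpha>}" using \<open>d > 0\<close> \<gamma>_less_\<alpha> by (auto simp: t_def)
    then have "z2 (\<gamma> + t) < z1 (\<gamma> + t)" using dec eq by auto
    with mid[OF \<open>\<gamma> + t \<in> {\<gamma>..\<alpha>}\<close>] show False by simp
  qed
  then show ?thesis using assms by (cases c1 c2 rule: linorder_cases) auto
qed

lemma prob1_unique:
  assumes z1: "prob1 \<alpha> h q c z1" and z2: "prob1 \<alpha> h q c z2" and x: "x \<in> {0..\<alpha>}"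
  shows "z1 x = z2 x"
proof (cases "\<gamma> \<le> x")
  case True
  then show ?thesis
    using mid.zeta_sol_unique[OF mid_sol_if_prob1[OF z1] mid_sol_if_prob1[OF z2]] x by simp
next
  case False
  then have "z1 (1 - (1 - x)) = z2 (1 - (1 - x))"
    using left.zeta_sol_unique[OF left_sol_if_prob1[OF z1] left_sol_if_prob1[OF z2], where x = "1 - x"] x
    by simp
  then show ?thesis by simp
qed

lemma c1star_eqI: "prob1 \<alpha> h q c z \<Longrightarrow> c1star \<alpha> h q = c"
  unfolding c1star_def by (rule the_equality) (blast, metis prob1_speed_unique)

lemma prob1_if_deriv_off_point:
  assumes p: "p \<in> {0<..<\<alpha>}" and cont: "continuous_on {0..\<alpha>} z" and neg: "\<And>x. x \<in> {0<..<\<alpha>} \<Longrightarrow> z x < 0"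
    and deriv: "\<And>x. x \<in> {0<..<\<alpha>} \<Longrightarrow> x \<noteq> p \<Longrightarrow> (z has_real_derivative h x - c - q x / z x) (at x)"
    and "z 0 = 0" "z \<alpha> = 0"
  shows "prob1 \<alpha> h q c z"
proof -
  define S where "S = {p / 2..(p + \<alpha>) / 2}"
  have S: "S \<subseteq> {0..\<alpha>}" "S \<subseteq> {0..1}" using p \<alpha>_less_1 by (auto simp: S_def)
  have "z t \<noteq> 0" if "t \<in> S" for t
    using neg[of t] that p by (auto simp: S_def)
  moreover have "continuous_on S h" "continuous_on S q" "continuous_on S z"
    using continuous_on_subset[OF cont_h S(2)] continuous_on_subset[OF cont_q S(2)]
      continuous_on_subset[OF cont S(1)] .
  ultimately have "continuous_on S (\<lambda>t. h t - c - q t / z t)" by (intro continuous_intros) auto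
  then have "(z has_real_derivative h p - c - q p / z p) (at p)"
    unfolding S_def
    by (rule has_real_derivative_if_continuous_off_point[where f' = "\<lambda>t. h t - c - q t / z t", rotated 3])
      (use \<open>continuous_on S z\<close> p deriv in \<open>auto simp: S_def\<close>)
  then have "(z has_real_derivative h x - c - q x / z x) (at x)" if "x \<in> {0<..<\<alpha>}" for x
    using deriv[OF that] by (cases "x = p") auto
  then show ?thesis using assms by (simp add: prob1_def)
qed

lemma prob1_glue:
  assumes zR: "zeta_sol q h \<gamma> \<alpha> c zR"
    and zL: "zeta_sol (\<lambda>\<phi>. - q (1 - \<phi>)) (\<lambda>\<phi>. - h (1 - \<phi>)) (1 - \<gamma>) 1 (- c) zL"
    and match: "zL (1 - \<gamma>) = zR \<gamma>" and neg: "zR \<gamma> < 0"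
  shows "prob1 \<alpha> h q c (glue \<gamma> (\<lambda>x. zL (1 - x)) zR)"
proof (rule prob1_if_deriv_off_point)
  let ?z = "glue \<gamma> (\<lambda>x. zL (1 - x)) zR"
  show "\<gamma> \<in> {0<..<\<alpha>}" using \<gamma>_pos \<gamma>_less_\<alpha> by simp
  show "continuous_on {0..\<alpha>} ?z"
    using continuous_on_reflect[of "1 - \<gamma>" 1 zL] zL zR match \<gamma>_pos \<gamma>_less_\<alpha>
    by (intro continuous_on_glue) (auto simp: zeta_sol_def)
  show "?z 0 = 0" "?z \<alpha> = 0" using zL zR \<gamma>_pos \<gamma>_less_\<alpha> by (simp_all add: glue_def zeta_sol_def)
  fix x assume x: "x \<in> {0<..<\<alpha>}"
  show "?z x < 0"
  proof (cases x \<gamma> rule: linorder_cases)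
    case less
    then have "1 - x \<in> {1 - \<gamma><..<1}" using x by auto
    then show ?thesis using zL less by (auto simp: glue_def zeta_sol_def)
  next
    case greater
    then have "x \<in> {\<gamma><..<\<alpha>}" using x by auto
    then show ?thesis using zR greater by (auto simp: glue_def zeta_sol_def)
  qed (use match neg in \<open>simp add: glue_def\<close>)
  assume "x \<noteq> \<gamma>"
  then show "(?z has_real_derivative h x - c - q x / ?z x) (at x)"
  proof (rule has_real_derivative_glue)
    assume "x < \<gamma>"
    then have "1 - x \<in> {1 - \<gamma><..<1}" using x by auto
    then have "(zL has_real_derivative - h (1 - (1 - x)) - - c - - q (1 - (1 - x)) / zL (1 - x)) (at (1 - x))"
      using zL unfolding zeta_sol_def by blast
    from has_real_derivative_reflect[OF this]
    show "((\<lambda>t. zL (1 - t)) has_real_derivative h x - c - q x / ?z x) (at x)"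
      using \<open>x < \<gamma>\<close> by (simp add: glue_def algebra_simps)
  next
    assume "\<gamma> < x"
    then show "(zR has_real_derivative h x - c - q x / ?z x) (at x)"
      using zR x by (simp add: zeta_sol_def glue_def)
  qed
qed

lemma probP_glue:
  assumes z1: "prob1 \<alpha> h q c z1"
    and \<zeta>: "zeta_sol (\<lambda>\<phi>. - q (1 - \<phi>)) (\<lambda>\<phi>. h (1 - \<phi>)) 0 (1 - \<alpha>) c \<zeta>" and "\<zeta> 0 = 0"
  shows "probP \<alpha> h q c (glue \<alpha> z1 (\<lambda>x. - \<zeta> (1 - x)))"
  unfolding probP_def
proof (intro conjI ballI)
  let ?z = "glue \<alpha> z1 (\<lambda>x. - \<zeta> (1 - x))"
  show "continuous_on {0..1} ?z"
    using continuous_on_minus[OF continuous_on_reflect[of 0 "1 - \<alpha>" \<zeta>]] z1 \<zeta> \<gamma>_pos \<gamma>_less_\<alpha> \<alpha>_less_1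
    by (intro continuous_on_glue) (auto simp: prob1_def zeta_sol_def)
  show "?z 0 = 0" "?z \<alpha> = 0" "?z 1 = 0"
    using z1 \<open>\<zeta> 0 = 0\<close> \<gamma>_pos \<gamma>_less_\<alpha> \<alpha>_less_1 by (simp_all add: glue_def prob1_def)
  show "?z x < 0" if "x \<in> {0<..<\<alpha>}" for x
    using z1 that by (simp add: glue_def prob1_def)
  show "?z x > 0" if "x \<in> {\<alpha><..<1}" for x
  proof -
    have "1 - x \<in> {0<..<1 - \<alpha>}" using that by auto
    then show ?thesis using \<zeta> that by (auto simp: glue_def zeta_sol_def)
  qed
  fix x assume x: "x \<in> {0<..<1} - {\<alpha>}"
  then show "(?z has_real_derivative h x - c - q x / ?z x) (at x)"
  proof (intro has_real_derivative_glue)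
    assume "x < \<alpha>"
    then show "(z1 has_real_derivative h x - c - q x / ?z x) (at x)"
      using z1 x by (simp add: prob1_def glue_def)
  next
    assume "\<alpha> < x"
    then have "1 - x \<in> {0<..<1 - \<alpha>}" using x by auto
    then have "(\<zeta> has_real_derivative h (1 - (1 - x)) - c - - q (1 - (1 - x)) / \<zeta> (1 - x)) (at (1 - x))"
      using \<zeta> unfolding zeta_sol_def by blast
    from DERIV_minus[OF has_real_derivative_reflect[OF this]]
    show "((\<lambda>t. - \<zeta> (1 - t)) has_real_derivative h x - c - q x / ?z x) (at x)"
      using \<open>\<alpha> < x\<close> by (simp add: glue_def algebra_simps)
  qed auto
qed

text \<open>\<open>c \<mapsto> zeta_left c\<close> increases on the middle piece while \<open>c \<mapsto> zeta_left (-c)\<close> decreases on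
  the reflected left piece, and both are unbounded below.\<close>
lemma exists_matching_speed: "\<exists>c. left.zeta_left (- c) = mid.zeta_left c"
proof -
  let ?F = "\<lambda>c. mid.zeta_left c - left.zeta_left (- c)"
  obtain p where p: "p \<le> 0" "mid.zeta_left p \<le> left.zeta_left 0" by (rule mid.zeta_left_unbounded_below)
  obtain r where r: "r \<le> 0" "left.zeta_left r \<le> mid.zeta_left 0" by (rule left.zeta_left_unbounded_below)
  have "left.zeta_left 0 \<le> left.zeta_left (- p)" using p by (intro monoD[OF left.mono_zeta_left]) simp
  then have "?F p \<le> 0" using p by simp
  have "mid.zeta_left 0 \<le> mid.zeta_left (- r)" using r by (intro monoD[OF mid.mono_zeta_left]) simp
  then have "0 \<le> ?F (- r)" using r by simp
  have "continuous_on UNIV mid.zeta_left" "continuous_on UNIV left.zeta_left"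
    using lipschitz_on_continuous_on[OF mid.lipschitz_zeta_left]
      lipschitz_on_continuous_on[OF left.lipschitz_zeta_left] .
  moreover have "continuous_on {p..- r} (\<lambda>c. left.zeta_left (- c))"
    using continuous_on_compose2[OF \<open>continuous_on UNIV left.zeta_left\<close> continuous_on_minus[OF continuous_on_id]]
    by simp
  ultimately have "continuous_on {p..- r} ?F"
    by (intro continuous_on_diff) (auto intro: continuous_on_subset)
  then obtain c where "?F c = 0"
    using IVT'[of ?F p 0 "- r"] \<open>?F p \<le> 0\<close> \<open>0 \<le> ?F (- r)\<close> p r by auto
  then have "left.zeta_left (- c) = mid.zeta_left c" by simp
  then show ?thesis ..
qed

lemma prob1_speed_bounds:
  assumes z: "prob1 \<alpha> h q c z"
  shows "c11 \<gamma> h q < ereal c" "ereal c < c12 \<gamma> \<alpha> h q"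
proof -
  have "z \<gamma> < 0" using z \<gamma>_pos \<gamma>_less_\<alpha> by (simp add: prob1_def)
  moreover have "mid.zeta_left c = z \<gamma>" by (rule mid.zeta_left_eq[OF mid_sol_if_prob1[OF z]])
  moreover have "left.zeta_left (- c) = z \<gamma>" using left.zeta_left_eq[OF left_sol_if_prob1[OF z]] by simp
  ultimately have "mid.zeta_left c < 0" "left.zeta_left (- c) < 0" by simp_all
  then have "ereal c < c12 \<gamma> \<alpha> h q" "ereal (- c) < - c11 \<gamma> h q"
    by (simp_all add: mid.zeta_left_neg_iff left.zeta_left_neg_iff c12_def c11_def)
  then show "ereal c < c12 \<gamma> \<alpha> h q" "c11 \<gamma> h q < ereal c"
    by (simp, metis ereal_minus_less_minus uminus_ereal.simps(1))
qed

lemma prob1_exists: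
  assumes "c11 \<gamma> h q < c12 \<gamma> \<alpha> h q"
  shows "\<exists>c z. prob1 \<alpha> h q c z"
proof -
  obtain c where match: "left.zeta_left (- c) = mid.zeta_left c" using exists_matching_speed by blast
  have "mid.zeta_left c < 0"
  proof (cases "ereal c < c12 \<gamma> \<alpha> h q")
    case True
    then show ?thesis using mid.zeta_left_neg_iff by (simp add: c12_def)
  next
    case False
    then have "c11 \<gamma> h q < ereal c" using assms by (simp add: not_less less_le_trans)
    then have "left.zeta_left (- c) < 0"
      by (simp add: left.zeta_left_neg_iff c11_def ereal_uminus_less_reorder)
    then show ?thesis using match by simp
  qed
  obtain zR zL where zR: "zeta_sol q h \<gamma> \<alpha> c zR"
    and zL: "zeta_sol (\<lambda>\<phi>. - q (1 - \<phi>)) (\<lambda>\<phi>. - h (1 - \<phi>)) (1 - \<gamma>) 1 (- c) zL"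
    using mid.zeta_sol_exists left.zeta_sol_exists by metis
  moreover have "zL (1 - \<gamma>) = zR \<gamma>" "zR \<gamma> < 0"
    using match \<open>mid.zeta_left c < 0\<close> mid.zeta_left_eq[OF zR] left.zeta_left_eq[OF zL] by simp_all
  ultimately show ?thesis using prob1_glue by blast
qed

lemma probP_exists_iff:
  "(\<exists>z. probP \<alpha> h q c z) \<longleftrightarrow> (\<exists>z. prob1 \<alpha> h q c z) \<and> c32 \<alpha> h q \<le> ereal c"
proof -
  have "\<exists>z. probP \<alpha> h q c z" if "prob1 \<alpha> h q c z" "right.zeta_left c = 0" for z
  proof -
    obtain \<zeta> where \<zeta>: "zeta_sol (\<lambda>\<phi>. - q (1 - \<phi>)) (\<lambda>\<phi>. h (1 - \<phi>)) 0 (1 - \<alpha>) c \<zeta>"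
      using right.zeta_sol_exists by blast
    moreover have "\<zeta> 0 = 0" using right.zeta_left_eq[OF \<zeta>] that(2) by simp
    ultimately show ?thesis using probP_glue[OF that(1)] by blast
  qed
  moreover have "right.zeta_left c = 0" if "probP \<alpha> h q c z" for z
    using right.zeta_left_eq[OF right_sol_if_probP[OF that]] that by (simp add: probP_def)
  moreover have "right.zeta_left c = 0 \<longleftrightarrow> c32 \<alpha> h q \<le> ereal c"
    using right.zeta_left_neg_iff[of c] right.zeta_left_nonpos[of c] by (auto simp: c32_def not_less)
  ultimately show ?thesis using prob1_if_probP by blast
qed

theorem probP_solvable_iff:
  "(\<exists>c z. probP \<alpha> h q c z) \<longleftrightarrow> c11 \<gamma> h q < c12 \<gamma> \<alpha> h q \<and> c32 \<alpha> h q \<le> ereal (c1star \<alpha> h q)"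
proof
  assume "\<exists>c z. probP \<alpha> h q c z"
  then obtain c z where z: "probP \<alpha> h q c z" by blast
  then have "c1star \<alpha> h q = c" using c1star_eqI prob1_if_probP by blast
  moreover have "c11 \<gamma> h q < c12 \<gamma> \<alpha> h q"
    using prob1_speed_bounds[OF prob1_if_probP[OF z]] by (rule less_trans)
  moreover have "c32 \<alpha> h q \<le> ereal c" using probP_exists_iff z by blast
  ultimately show "c11 \<gamma> h q < c12 \<gamma> \<alpha> h q \<and> c32 \<alpha> h q \<le> ereal (c1star \<alpha> h q)" by simp
next
  assume *: "c11 \<gamma> h q < c12 \<gamma> \<alpha> h q \<and> c32 \<alpha> h q \<le> ereal (c1star \<alpha> h q)"
  then obtain c z where z: "prob1 \<alpha> h q c z" using prob1_exists by blast
  then have "c32 \<alpha> h q \<le> ereal c" using * c1star_eqI[OF z] by simp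
  then show "\<exists>c z. probP \<alpha> h q c z" using probP_exists_iff z by blast
qed

theorem probP_unique:
  assumes z: "probP \<alpha> h q c z"
  shows "c = c1star \<alpha> h q \<and> (\<forall>z'. probP \<alpha> h q c z' \<longrightarrow> (\<forall>x\<in>{0..1}. z' x = z x))"
proof (intro conjI allI impI ballI)
  show "c = c1star \<alpha> h q" using c1star_eqI[OF prob1_if_probP[OF z]] by simp
  fix z' :: "real \<Rightarrow> real" and x :: real
  assume z': "probP \<alpha> h q c z'" and x: "x \<in> {0..1}"
  show "z' x = z x"
  proof (cases "x \<le> \<alpha>")
    case True
    then show ?thesis using prob1_unique[OF prob1_if_probP[OF z'] prob1_if_probP[OF z]] x by simp
  next
    case False
    then have "- z' (1 - (1 - x)) = - z (1 - (1 - x))"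
      using right.zeta_sol_unique[OF right_sol_if_probP[OF z'] right_sol_if_probP[OF z], where x = "1 - x"] x
      by simp
    then show ?thesis by simp
  qed
qed

end

lemma continuous_on_if_C1_on: "C1_on a b u u' \<Longrightarrow> continuous_on {a..b} u"
  unfolding C1_on_def continuous_on_eq_continuous_within using DERIV_continuous by blast

theorem proposition4p6:
  fixes \<gamma> \<alpha> :: real and f h D D' g q :: "real \<Rightarrow> real"
  assumes "0 < \<gamma>" "\<gamma> < \<alpha>" "\<alpha> < 1"
    and "C1_on 0 1 f h" "f 0 = 0"
    and "C1_on 0 1 D D'"
    and "\<forall>x\<in>{0<..<\<alpha>}. D x > 0" "\<forall>x\<in>{\<alpha><..<1}. D x < 0"
    and "continuous_on {0..1} g"
    and "\<forall>x\<in>{0<..<\<gamma>}. g x < 0" "\<forall>x\<in>{\<gamma><..<1}. g x > 0"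
    and "g 0 = 0" "g \<gamma> = 0" "g 1 = 0"
    and "q = (\<lambda>x. D x * g x)"
  shows "((\<exists>c z. probP \<alpha> h q c z) \<longleftrightarrow>
            (c11 \<gamma> h q < c12 \<gamma> \<alpha> h q \<and> ereal (c1star \<alpha> h q) \<ge> c32 \<alpha> h q))
         \<and> (\<forall>c z. probP \<alpha> h q c z \<longrightarrow>
               c = c1star \<alpha> h q \<and> (\<forall>z'. probP \<alpha> h q c z' \<longrightarrow> (\<forall>x\<in>{0..1}. z' x = z x)))"
proof -
  interpret problem_P \<gamma> \<alpha> h q
  proof
    show "continuous_on {0..1} h" using \<open>C1_on 0 1 f h\<close> by (simp add: C1_on_def)
    show "continuous_on {0..1} q"
      using continuous_on_if_C1_on[OF \<open>C1_on 0 1 D D'\<close>] assms by (auto intro: continuous_intros)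
  next
    fix x assume "0 < x" "x < \<gamma>"
    then show "q x < 0" using assms by (simp add: mult_pos_neg)
  next
    fix x assume "\<gamma> < x" "x < \<alpha>"
    then show "q x > 0" using assms by simp
  next
    fix x assume "\<alpha> < x" "x < 1"
    then show "q x < 0" using assms by (simp add: mult_neg_pos)
  qed (use assms in simp_all)
  show ?thesis using probP_solvable_iff probP_unique by blast
qed

end
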